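(* In the setting of the context, let $\lambda_2$ be the second largest singular value (counted with multiplicity) of $\mathcal B$. Then $$\lambda_2=\max\{\|\Im(B^*u)\|:\ u\in\mathbb C^n,\ \langle iu,x_0\rangle=0,\ \|u\|=1\}=\max\{\|\mathcal B^\top u\|:\ u\in\mathbb R^{2n},\ u\perp G(x_0),\ \|u\|=1\}.$$
   Context: $A^*\in\mathbb C^{N\times n}$ is isometric ($AA^*=I_n$), $N\ge2n$, $x_0\in\mathbb C^n$ with $\|x_0\|=1$, $B=A\,\mathrm{diag}\big(\frac{A^*x_0}{|A^*x_0|}\big)$ (componentwise quotient, convention $y(j)/|y(j)|=1$ if $y(j)=0$), $\mathcal B=\begin{bmatrix}\Re B\\ \Im B\end{bmatrix}\in\mathbb R^{2n\times N}$. $G(v):=\begin{bmatrix}\Re v\\ \Im v\end{bmatrix}$. The real inner product on $\mathbb C^n$ is $\langle u,v\rangle=\Re(u^*v)$; on $\mathbb R^{2n}$, $\perp$ means orthogonal for the dot product. *)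

theory Defs
  imports "Jordan_Normal_Form.Schur_Decomposition" "Jordan_Normal_Form.Char_Poly"
    "HOL-Computational_Algebra.Polynomial"
begin

definition cnorm :: "complex vec \<Rightarrow> real" where
  "cnorm v = sqrt (\<Sum>i<dim_vec v. (cmod (v $ i))\<^sup>2)"

definition rnorm :: "real vec \<Rightarrow> real" where
  "rnorm v = sqrt (\<Sum>i<dim_vec v. (v $ i)\<^sup>2)"

definition cinner_re :: "complex vec \<Rightarrow> complex vec \<Rightarrow> real" where
  "cinner_re u v = Re (\<Sum>i<dim_vec v. cnj (u $ i) * v $ i)"

definition phase_vec :: "complex vec \<Rightarrow> complex vec" where
  "phase_vec y = vec (dim_vec y) (\<lambda>j. if y $ j = 0 then 1 else y $ j / complex_of_real (cmod (y $ j)))"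

definition diag_of_vec :: "complex vec \<Rightarrow> complex mat" where
  "diag_of_vec d = mat (dim_vec d) (dim_vec d) (\<lambda>(i,j). if i = j then d $ i else 0)"

definition phaseB :: "complex mat \<Rightarrow> complex vec \<Rightarrow> complex mat" where
  "phaseB A x0 = A * diag_of_vec (phase_vec (mat_adjoint A *\<^sub>v x0))"

definition realify :: "complex mat \<Rightarrow> real mat" where
  "realify M = mat (2 * dim_row M) (dim_col M)
     (\<lambda>(i,j). if i < dim_row M then Re (M $$ (i,j)) else Im (M $$ (i - dim_row M, j)))"

definition Gvec :: "complex vec \<Rightarrow> real vec" where
  "Gvec v = vec (2 * dim_vec v) (\<lambda>i. if i < dim_vec v then Re (v $ i) else Im (v $ (i - dim_vec v)))"

definition Im_vec :: "complex vec \<Rightarrow> real vec" where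
  "Im_vec v = vec (dim_vec v) (\<lambda>i. Im (v $ i))"

definition gram_eigenvalues :: "real mat \<Rightarrow> complex multiset" where
  "gram_eigenvalues M = proots (char_poly (map_mat complex_of_real (transpose_mat M * M)))"

(* singular values of a real p x q matrix, in non-increasing order, counted with
   multiplicity: square roots of the eigenvalues of M^T M (which are real and
   nonnegative), the largest min(p,q) of them *)
definition singular_values :: "real mat \<Rightarrow> real list" where
  "singular_values M = take (min (dim_row M) (dim_col M))
     (rev (sorted_list_of_multiset (image_mset (\<lambda>z. sqrt (Re z)) (gram_eigenvalues M))))"

definition is_max_of :: "real set \<Rightarrow> real \<Rightarrow> bool" where
  "is_max_of S m \<longleftrightarrow> m \<in> S \<and> (\<forall>x\<in>S. x \<le> m)"

end

theory Submission
  imports Defs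
begin

(* Write BB for the realification [Re B; Im B] and G(v) = [Re v; Im v]. Then
   BB^T G(v) = Re (B^* v), so BB^T is a contraction because B is a co-isometry, and it
   attains its norm at G(x0): B^* x0 = |A^* x0| is real, whence |BB^T G(x0)| = |x0| = 1.
   For a real matrix M whose transpose is a contraction attaining its norm at a unit vector
   g, the top eigenvalue 1 of M^T M has M^T g as eigenvector, and expanding M^T u in an
   orthonormal eigenbasis shows that the maximum of |M^T u| over unit u orthogonal to g is
   the square root of the second largest eigenvalue, i.e. the second singular value.
   Finally u |-> G(-i u) maps the complex constraint set onto the real one and turns
   Im (B^* u) into BB^T G(-i u). *)

section \<open>Complex inner products and norms\<close>

lemma mat_adjoint_dim [simp]:
  "dim_row (mat_adjoint A) = dim_col A" "dim_col (mat_adjoint A) = dim_row A"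
  unfolding mat_adjoint_def by auto

lemma mat_adjoint_carrier [simp]: "A \<in> carrier_mat n m \<Longrightarrow> mat_adjoint A \<in> carrier_mat m n"
  unfolding carrier_mat_def by auto

lemma mat_adjoint_index [simp]:
  "i < dim_col A \<Longrightarrow> j < dim_row A \<Longrightarrow> mat_adjoint A $$ (i,j) = conjugate (A $$ (j,i))"
  unfolding mat_adjoint_def mat_of_rows_def by (auto simp: cols_def)

lemma mat_adjoint_adjoint [simp]: "mat_adjoint (mat_adjoint (A :: 'a :: conjugatable_field mat)) = A"
  by (rule eq_matI) auto

lemma mat_adjoint_one [simp]: "mat_adjoint (1\<^sub>m n :: complex mat) = 1\<^sub>m n"
  by (rule eq_matI) auto

lemma mat_adjoint_mult:
  fixes A :: "'a :: conjugatable_field mat"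
  assumes "A \<in> carrier_mat n m" "B \<in> carrier_mat m k"
  shows "mat_adjoint (A * B) = mat_adjoint B * mat_adjoint A"
proof (rule eq_matI)
  fix i j assume "i < dim_row (mat_adjoint B * mat_adjoint A)" "j < dim_col (mat_adjoint B * mat_adjoint A)"
  then have i: "i < k" and j: "j < n" using assms by auto
  have "mat_adjoint (A * B) $$ (i, j) = conjugate (row A j \<bullet> col B i)"
    using assms i j by auto
  also have "\<dots> = (\<Sum>l<m. conjugate (A $$ (j,l)) * conjugate (B $$ (l,i)))"
    using assms i j unfolding scalar_prod_def
    by (simp add: sum_conjugate conjugate_dist_mul atLeast0LessThan)
  also have "\<dots> = row (mat_adjoint B) i \<bullet> col (mat_adjoint A) j"
    using assms i j unfolding scalar_prod_def
    by (auto simp: atLeast0LessThan mult.commute intro!: sum.cong)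
  finally show "mat_adjoint (A * B) $$ (i, j) = (mat_adjoint B * mat_adjoint A) $$ (i, j)"
    using assms i j by auto
qed (use assms in auto)

lemma mat_adjoint_four_block_diag:
  fixes A :: "'a :: conjugatable_field mat"
  assumes "A \<in> carrier_mat n1 n1" "D \<in> carrier_mat n2 n2"
  shows "mat_adjoint (four_block_mat A (0\<^sub>m n1 n2) (0\<^sub>m n2 n1) D)
    = four_block_mat (mat_adjoint A) (0\<^sub>m n1 n2) (0\<^sub>m n2 n1) (mat_adjoint D)"
  by (rule eq_matI) (use assms in auto)

lemma cscalar_prod_eq_sum: "x \<bullet>c y = (\<Sum>i<dim_vec y. x $ i * cnj (y $ i))"
  unfolding scalar_prod_def by (simp add: atLeast0LessThan)

lemma cscalar_prod_commute:
  fixes x y :: "complex vec"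
  assumes "x \<in> carrier_vec n" "y \<in> carrier_vec n"
  shows "y \<bullet>c x = cnj (x \<bullet>c y)"
  using assms unfolding cscalar_prod_eq_sum by (auto simp: mult.commute intro!: sum.cong)

lemma cscalar_prod_diff_left:
  fixes x y z :: "complex vec"
  assumes "x \<in> carrier_vec n" "y \<in> carrier_vec n" "z \<in> carrier_vec n"
  shows "(x - y) \<bullet>c z = x \<bullet>c z - y \<bullet>c z"
  using assms unfolding cscalar_prod_eq_sum by (simp add: sum_subtractf algebra_simps)

lemma cscalar_prod_smult_left:
  fixes x y :: "complex vec"
  assumes "x \<in> carrier_vec n" "y \<in> carrier_vec n"
  shows "(a \<cdot>\<^sub>v x) \<bullet>c y = a * (x \<bullet>c y)"
  using assms unfolding cscalar_prod_eq_sum by (auto simp: sum_distrib_left algebra_simps)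

lemma cscalar_prod_smult_right:
  fixes x y :: "complex vec"
  assumes "x \<in> carrier_vec n" "y \<in> carrier_vec n"
  shows "x \<bullet>c (a \<cdot>\<^sub>v y) = cnj a * (x \<bullet>c y)"
  using assms unfolding cscalar_prod_eq_sum by (auto simp: sum_distrib_left algebra_simps)

lemma cscalar_prod_mat_adjoint:
  fixes A :: "complex mat"
  assumes A: "A \<in> carrier_mat p q" and x: "x \<in> carrier_vec q" and y: "y \<in> carrier_vec p"
  shows "(A *\<^sub>v x) \<bullet>c y = x \<bullet>c (mat_adjoint A *\<^sub>v y)"
proof -
  have "(A *\<^sub>v x) \<bullet>c y = (\<Sum>i<p. \<Sum>j<q. A $$ (i,j) * x $ j * cnj (y $ i))"
    using assms unfolding cscalar_prod_eq_sum
    by (auto simp: scalar_prod_def atLeast0LessThan sum_distrib_right intro!: sum.cong)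
  also have "\<dots> = (\<Sum>j<q. \<Sum>i<p. A $$ (i,j) * x $ j * cnj (y $ i))"
    by (rule sum.swap)
  also have "\<dots> = x \<bullet>c (mat_adjoint A *\<^sub>v y)"
    using assms unfolding cscalar_prod_eq_sum
    by (auto simp: scalar_prod_def atLeast0LessThan sum_distrib_left algebra_simps intro!: sum.cong)
  finally show ?thesis .
qed

definition sqnorm :: "complex vec \<Rightarrow> real" where
  "sqnorm v = Re (v \<bullet>c v)"

lemma sqnorm_eq_sum: "sqnorm v = (\<Sum>i<dim_vec v. (cmod (v $ i))\<^sup>2)"
  unfolding sqnorm_def cscalar_prod_eq_sum Re_sum
  by (simp add: complex_mult_cnj cmod_power2 flip: of_real_power)

lemma cscalar_prod_self: "v \<bullet>c v = complex_of_real (sqnorm v)"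
  unfolding sqnorm_eq_sum cscalar_prod_eq_sum of_real_sum
  by (simp add: complex_mult_cnj cmod_power2 flip: of_real_power)

lemma sqnorm_nonneg: "sqnorm v \<ge> 0"
  unfolding sqnorm_eq_sum by (simp add: sum_nonneg)

lemma sqnorm_eq_0_iff: "v \<in> carrier_vec n \<Longrightarrow> sqnorm v = 0 \<longleftrightarrow> v = 0\<^sub>v n"
  using cscalar_prod_self[of v] conjugate_square_eq_0_vec[of v n] by (metis of_real_eq_0_iff)

lemma sqnorm_smult: "sqnorm (a \<cdot>\<^sub>v v) = (cmod a)\<^sup>2 * sqnorm v"
  unfolding sqnorm_eq_sum by (simp add: norm_mult power_mult_distrib sum_distrib_left)

lemma cnorm_square: "(cnorm v)\<^sup>2 = sqnorm v"
  unfolding cnorm_def sqnorm_eq_sum by (simp add: sum_nonneg)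

lemma sqnorm_of_real_vec: "sqnorm (map_vec complex_of_real x) = (rnorm x)\<^sup>2"
  unfolding sqnorm_eq_sum rnorm_def by (simp add: sum_nonneg)

lemma sqnorm_Re_Im:
  "sqnorm v = (rnorm (map_vec Re v))\<^sup>2 + (rnorm (map_vec Im v))\<^sup>2"
  unfolding sqnorm_eq_sum rnorm_def by (simp add: sum_nonneg cmod_power2 sum.distrib)

lemma cauchy_schwarz_cscalar_prod:
  fixes x y :: "complex vec"
  assumes x: "x \<in> carrier_vec n" and y: "y \<in> carrier_vec n"
  shows "(cmod (x \<bullet>c y))\<^sup>2 \<le> sqnorm x * sqnorm y"
proof (cases "y = 0\<^sub>v n")
  case True
  then show ?thesis using x by (simp add: cscalar_prod_eq_sum sqnorm_eq_sum)
next
  case False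
  define t where "t = sqnorm y"
  have t: "t > 0"
    using sqnorm_eq_0_iff[OF y] sqnorm_nonneg[of y] False unfolding t_def by linarith
  define a where "a = x \<bullet>c y"
  define b where "b = - a / of_real t"
  \<comment> \<open>expand \<open>0 \<le> sqnorm (x + b y)\<close> for the minimising coefficient \<open>b\<close>\<close>
  have "(x + b \<cdot>\<^sub>v y) \<bullet>c (x + b \<cdot>\<^sub>v y)
      = x \<bullet>c x + cnj b * (x \<bullet>c y) + b * (y \<bullet>c x) + b * cnj b * (y \<bullet>c y)"
    using x y unfolding cscalar_prod_eq_sum
    by (auto simp: sum.distrib sum_distrib_left algebra_simps intro!: sum.cong)
  also have "\<dots> = x \<bullet>c x + (cnj b * a + b * cnj a + b * cnj b * of_real t)"
    using cscalar_prod_commute[OF x y] cscalar_prod_self[of y] unfolding a_def t_def by simp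
  moreover have "cnj b * a + b * cnj a + b * cnj b * of_real t = - of_real ((cmod a)\<^sup>2 / t)"
  proof -
    have "a * cnj a = of_real ((cmod a)\<^sup>2)"
      by (simp add: complex_mult_cnj cmod_power2 flip: of_real_power)
    then show ?thesis using t unfolding b_def by (simp add: field_simps power2_eq_square)
  qed
  ultimately have "sqnorm (x + b \<cdot>\<^sub>v y) = sqnorm x - (cmod a)\<^sup>2 / t"
    unfolding sqnorm_def by (simp del: of_real_divide of_real_power)
  with sqnorm_nonneg[of "x + b \<cdot>\<^sub>v y"] have "(cmod a)\<^sup>2 / t \<le> sqnorm x" by linarith
  then show ?thesis using t unfolding a_def t_def by (simp add: field_simps)
qed

lemma sqnorm_diff:
  fixes x y :: "complex vec"
  assumes "x \<in> carrier_vec n" "y \<in> carrier_vec n"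
  shows "sqnorm (x - y) = sqnorm x + sqnorm y - 2 * Re (x \<bullet>c y)"
proof -
  have "(cmod (a - b))\<^sup>2 = (cmod a)\<^sup>2 + (cmod b)\<^sup>2 - 2 * Re (a * cnj b)" for a b :: complex
    unfolding cmod_power2 by (simp add: power2_eq_square algebra_simps)
  then show ?thesis
    using assms unfolding sqnorm_eq_sum cscalar_prod_eq_sum
    by (simp add: sum.distrib sum_subtractf sum_distrib_left)
qed

lemma sqnorm_mat_adjoint_mult:
  assumes B: "B \<in> carrier_mat n N" "B * mat_adjoint B = 1\<^sub>m n" and v: "v \<in> carrier_vec n"
  shows "sqnorm (mat_adjoint B *\<^sub>v v) = sqnorm v"
proof -
  have Bv: "B *\<^sub>v (mat_adjoint B *\<^sub>v v) = v"
    using assoc_mult_mat_vec[OF B(1) mat_adjoint_carrier[OF B(1)] v, symmetric] B(2) v by simp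
  have "(mat_adjoint B *\<^sub>v v) \<bullet>c (mat_adjoint B *\<^sub>v v) = v \<bullet>c (B *\<^sub>v (mat_adjoint B *\<^sub>v v))"
    using cscalar_prod_mat_adjoint[OF mat_adjoint_carrier[OF B(1)] v
        mult_mat_vec_carrier[OF mat_adjoint_carrier[OF B(1)] v]] by simp
  then show ?thesis unfolding Bv by (simp add: sqnorm_def)
qed

section \<open>Real vectors and their complex embedding\<close>

lemma rnorm_nonneg: "rnorm x \<ge> 0"
  unfolding rnorm_def by (simp add: sum_nonneg)

lemma rnorm_square: "(rnorm x)\<^sup>2 = x \<bullet> x"
  unfolding rnorm_def scalar_prod_def by (simp add: sum_nonneg atLeast0LessThan power2_eq_square)

lemma rnorm_eq_1_iff: "rnorm x = 1 \<longleftrightarrow> (rnorm x)\<^sup>2 = 1"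
  using rnorm_nonneg[of x] by (auto simp: power2_eq_1_iff)

lemma rnorm_smult: "rnorm (c \<cdot>\<^sub>v x) = \<bar>c\<bar> * rnorm x"
  unfolding rnorm_def
  by (simp add: power_mult_distrib sum_distrib_left[symmetric] real_sqrt_mult)

lemma rnorm_eq_0_iff: "x \<in> carrier_vec n \<Longrightarrow> rnorm x = 0 \<longleftrightarrow> x = 0\<^sub>v n"
  using sqnorm_eq_0_iff[of "map_vec complex_of_real x" n] sqnorm_of_real_vec[of x]
  by (auto simp: vec_eq_iff)

lemma cscalar_prod_of_real_vec:
  assumes "x \<in> carrier_vec n" "y \<in> carrier_vec n"
  shows "map_vec complex_of_real x \<bullet>c map_vec complex_of_real y = complex_of_real (x \<bullet> y)"
  using assms unfolding cscalar_prod_eq_sum by (simp add: scalar_prod_def atLeast0LessThan)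

lemma Re_cscalar_prod_of_real_vec:
  assumes "z \<in> carrier_vec n" "y \<in> carrier_vec n"
  shows "Re (z \<bullet>c map_vec complex_of_real y) = map_vec Re z \<bullet> y"
    and "Im (z \<bullet>c map_vec complex_of_real y) = map_vec Im z \<bullet> y"
  using assms unfolding cscalar_prod_eq_sum by (simp_all add: scalar_prod_def atLeast0LessThan)

lemma of_real_mat_mult_vec:
  assumes "R \<in> carrier_mat a b" "x \<in> carrier_vec b"
  shows "map_mat complex_of_real R *\<^sub>v map_vec complex_of_real x = map_vec complex_of_real (R *\<^sub>v x)"
  by (rule of_real_hom.mult_mat_vec_hom[OF assms, symmetric])

lemma Re_of_real_mat_mult_vec:
  assumes "R \<in> carrier_mat a b" "z \<in> carrier_vec b"
  shows "map_vec Re (map_mat complex_of_real R *\<^sub>v z) = R *\<^sub>v map_vec Re z"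
    and "map_vec Im (map_mat complex_of_real R *\<^sub>v z) = R *\<^sub>v map_vec Im z"
  using assms by (auto simp: scalar_prod_def intro!: sum.cong)

lemma exists_unit_orthogonal:
  fixes g :: "real vec"
  assumes g: "g \<in> carrier_vec p" and p: "2 \<le> p"
  shows "\<exists>u. u \<in> carrier_vec p \<and> u \<bullet> g = 0 \<and> rnorm u = 1"
proof (cases "g $ 0 = 0 \<and> g $ 1 = 0")
  case True
  then show ?thesis
    using g p unfolding rnorm_eq_1_iff rnorm_square by (intro exI[of _ "unit_vec p 0"]) simp
next
  case False
  define s where "s = sqrt ((g $ 0)\<^sup>2 + (g $ 1)\<^sup>2)"
  have s: "s > 0" using False unfolding s_def by (simp add: sum_power2_gt_zero_iff)
  \<comment> \<open>rotate the first two coordinates of \<open>g\<close> by a right angle\<close>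
  define u where "u = vec p (\<lambda>i. if i = 0 then g $ 1 / s else if i = 1 then - g $ 0 / s else 0)"
  have u: "u \<in> carrier_vec p" unfolding u_def by simp
  have sum2: "(\<Sum>i<p. f i) = f 0 + f 1" if "\<And>i. 2 \<le> i \<Longrightarrow> i < p \<Longrightarrow> f i = 0" for f :: "nat \<Rightarrow> real"
  proof -
    have "(\<Sum>i<p. f i) = (\<Sum>i\<in>{0, 1}. f i)"
      by (rule sum.mono_neutral_right) (use p that in auto)
    then show ?thesis by simp
  qed
  have "u \<bullet> g = g $ 1 / s * g $ 0 - g $ 0 / s * g $ 1"
    using p unfolding scalar_prod_def atLeast0LessThan u_def carrier_vecD[OF g] by (subst sum2) auto
  then have ug: "u \<bullet> g = 0" by simp
  have "(rnorm u)\<^sup>2 = (\<Sum>i<p. u $ i * u $ i)"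
    unfolding rnorm_square scalar_prod_def atLeast0LessThan using u by simp
  also have "\<dots> = u $ 0 * u $ 0 + u $ 1 * u $ 1"
    by (rule sum2) (simp add: u_def)
  also have "\<dots> = ((g $ 0)\<^sup>2 + (g $ 1)\<^sup>2) / s\<^sup>2"
    using p by (simp add: u_def power2_eq_square add_divide_distrib)
  also have "\<dots> = 1"
    using False unfolding s_def by simp
  finally show ?thesis using u ug unfolding rnorm_eq_1_iff by blast
qed

section \<open>Unitary diagonalisation of Hermitian matrices\<close>

definition unitary_mat :: "complex mat \<Rightarrow> nat \<Rightarrow> bool" where
  "unitary_mat U n \<longleftrightarrow> U \<in> carrier_mat n n \<and> mat_adjoint U * U = 1\<^sub>m n"

lemma unitary_mat_right_inverse: "unitary_mat U n \<Longrightarrow> U * mat_adjoint U = 1\<^sub>m n"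
  unfolding unitary_mat_def using mat_mult_left_right_inverse[of "mat_adjoint U" n U] by auto

lemma unitary_mat_mult:
  assumes "unitary_mat U n" "unitary_mat V n"
  shows "unitary_mat (U * V) n"
proof -
  have U: "U \<in> carrier_mat n n" and V: "V \<in> carrier_mat n n"
    using assms unfolding unitary_mat_def by auto
  have "mat_adjoint (U * V) * (U * V) = mat_adjoint V * ((mat_adjoint U * U) * V)"
    using U V by (simp add: mat_adjoint_mult[OF U V] assoc_mult_mat[of _ n n _ n _ n])
  then show ?thesis using assms U V unfolding unitary_mat_def by simp
qed

lemma unitary_mat_four_block_one:
  assumes U: "unitary_mat U k"
  shows "unitary_mat (four_block_mat (1\<^sub>m 1) (0\<^sub>m 1 k) (0\<^sub>m k 1) U) (Suc k)"
proof -
  have Uc: "U \<in> carrier_mat k k" and UU: "mat_adjoint U * U = 1\<^sub>m k"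
    using U unfolding unitary_mat_def by auto
  show ?thesis
    unfolding unitary_mat_def mat_adjoint_four_block_diag[of _ 1 U k, OF one_carrier_mat Uc]
    by (subst mult_four_block_mat[of _ 1 1 _ k _ k _ _ 1 _ k]) (use Uc UU in auto)
qed

lemma mat_adjoint_mult_index:
  fixes W :: "complex mat"
  assumes "W \<in> carrier_mat n m" "i < m" "j < m"
  shows "(mat_adjoint W * W) $$ (i,j) = col W j \<bullet>c col W i"
proof -
  have "(mat_adjoint W * W) $$ (i,j) = (\<Sum>k<n. cnj (W $$ (k,i)) * W $$ (k,j))"
    using assms by (auto simp: scalar_prod_def atLeast0LessThan intro!: sum.cong)
  also have "\<dots> = col W j \<bullet>c col W i"
    using assms unfolding scalar_prod_def by (auto simp: atLeast0LessThan intro!: sum.cong)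
  finally show ?thesis .
qed

definition cvec_normalize :: "complex vec \<Rightarrow> complex vec" where
  "cvec_normalize v = complex_of_real (1 / sqrt (sqnorm v)) \<cdot>\<^sub>v v"

lemma cvec_normalize_carrier [simp]: "v \<in> carrier_vec n \<Longrightarrow> cvec_normalize v \<in> carrier_vec n"
  unfolding cvec_normalize_def by simp

lemma sqnorm_cvec_normalize:
  assumes "v \<in> carrier_vec n" "v \<noteq> 0\<^sub>v n"
  shows "sqnorm (cvec_normalize v) = 1"
proof -
  have "sqnorm v > 0" using sqnorm_eq_0_iff[OF assms(1)] sqnorm_nonneg[of v] assms(2) by linarith
  then show ?thesis
    unfolding cvec_normalize_def sqnorm_smult norm_of_real by (simp add: power_divide)
qed

lemma cvec_normalize_unit: "sqnorm v = 1 \<Longrightarrow> cvec_normalize v = v"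
  unfolding cvec_normalize_def by simp

lemma unitary_mat_of_normalized_cols:
  assumes wsc: "set ws \<subseteq> carrier_vec n" and orth: "corthogonal ws" and lws: "length ws = n"
  shows "unitary_mat (mat_of_cols n (map cvec_normalize ws)) n"
proof -
  define W where "W = mat_of_cols n (map cvec_normalize ws)"
  have wsi: "i < n \<Longrightarrow> ws ! i \<in> carrier_vec n" for i using wsc lws by auto
  have wsi0: "i < n \<Longrightarrow> ws ! i \<noteq> 0\<^sub>v n" for i
    using corthogonalD[OF orth, of i i] lws by auto
  have W: "W \<in> carrier_mat n n" unfolding W_def using lws by auto
  have colW: "i < n \<Longrightarrow> col W i = cvec_normalize (ws ! i)" for i
    unfolding W_def using lws wsi by auto
  have "mat_adjoint W * W = 1\<^sub>m n"
  proof (rule eq_matI)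
    fix i j assume "i < dim_row (1\<^sub>m n)" "j < dim_col (1\<^sub>m n)"
    then have i: "i < n" and j: "j < n" by auto
    have "col W j \<bullet>c col W i = 1\<^sub>m n $$ (i,j)"
    proof (cases "i = j")
      case True
      then show ?thesis
        using sqnorm_cvec_normalize[OF wsi[OF i] wsi0[OF i]] i colW[OF i]
        by (simp add: cscalar_prod_self)
    next
      case False
      then have "ws ! j \<bullet>c ws ! i = 0" using corthogonalD[OF orth, of j i] i j lws by auto
      then show ?thesis
        using False i j wsi[OF i] wsi[OF j] unfolding colW[OF i] colW[OF j] cvec_normalize_def
        by (simp add: cscalar_prod_smult_left[of _ n] cscalar_prod_smult_right[of _ n])
    qed
    then show "(mat_adjoint W * W) $$ (i,j) = 1\<^sub>m n $$ (i,j)"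
      using mat_adjoint_mult_index[OF W i j] by simp
  qed (use W in auto)
  then show ?thesis using W unfolding unitary_mat_def W_def by blast
qed

lemma unitary_completion:
  fixes v :: "complex vec"
  assumes v: "v \<in> carrier_vec n" and v1: "sqnorm v = 1" and n: "n > 0"
  shows "\<exists>W. unitary_mat W n \<and> col W 0 = v"
proof -
  interpret cof_vec_space n "TYPE(complex)" .
  have v0: "v \<noteq> 0\<^sub>v n" using v1 sqnorm_eq_0_iff[OF v] by auto
  define b where "b = basis_completion v"
  from basis_completion[OF v v0, folded b_def]
  have dist_b: "distinct b" and indep: "\<not> lin_dep (set b)" and bc: "set b \<subseteq> carrier_vec n"
    and hdb: "hd b = v" and len_b: "length b = n" by auto
  from hdb len_b n obtain vs where bv: "b = v # vs" by (cases b) auto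
  define ws where "ws = gram_schmidt n b"
  from gram_schmidt_result[OF bc dist_b indep refl, folded ws_def]
  have wsc: "set ws \<subseteq> carrier_vec n" and orth: "corthogonal ws" and lws: "length ws = n"
    by (auto simp: len_b)
  have ws0: "ws ! 0 = v"
    using gram_schmidt_hd[OF v, of vs, folded bv] lws n unfolding ws_def[symmetric]
    by (cases ws) auto
  have "ws ! 0 \<in> carrier_vec n" using wsc lws n by auto
  then have "col (mat_of_cols n (map cvec_normalize ws)) 0 = cvec_normalize (ws ! 0)"
    using lws n by auto
  then have "col (mat_of_cols n (map cvec_normalize ws)) 0 = v"
    unfolding ws0 cvec_normalize_unit[OF v1] .
  then show ?thesis using unitary_mat_of_normalized_cols[OF wsc orth lws] by blast
qed

lemma exists_unit_eigenvector:
  fixes H :: "complex mat"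
  assumes H: "H \<in> carrier_mat (Suc k) (Suc k)"
  shows "\<exists>e v. v \<in> carrier_vec (Suc k) \<and> sqnorm v = 1 \<and> H *\<^sub>v v = e \<cdot>\<^sub>v v"
proof -
  obtain as where cp: "char_poly H = (\<Prod>a \<leftarrow> as. [:- a, 1:])" and len: "length as = Suc k"
    using char_poly_factorized[OF H] by blast
  then obtain e as' where as: "as = e # as'" by (cases as) auto
  have "eigenvalue H e"
    using eigenvalue_root_char_poly[OF H] unfolding cp as by simp
  then obtain v where "eigenvector H v e" using find_eigenvector[OF H] by blast
  then have v: "v \<in> carrier_vec (Suc k)" and v0: "v \<noteq> 0\<^sub>v (Suc k)" and Hv: "H *\<^sub>v v = e \<cdot>\<^sub>v v"
    using H unfolding eigenvector_def by auto
  have "H *\<^sub>v cvec_normalize v = e \<cdot>\<^sub>v cvec_normalize v"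
    unfolding cvec_normalize_def using H v Hv
    by (simp add: mult_mat_vec smult_smult_assoc mult.commute)
  then show ?thesis
    using sqnorm_cvec_normalize[OF v v0] v by (intro exI[of _ e] exI[of _ "cvec_normalize v"]) auto
qed

lemma diag_of_vec_carrier [simp]: "d \<in> carrier_vec n \<Longrightarrow> diag_of_vec d \<in> carrier_mat n n"
  unfolding diag_of_vec_def carrier_vec_def by auto

lemma diag_of_vec_mult_vec:
  assumes "d \<in> carrier_vec n" "c \<in> carrier_vec n"
  shows "diag_of_vec d *\<^sub>v c = vec n (\<lambda>j. d $ j * c $ j)"
proof (rule eq_vecI)
  fix j assume "j < dim_vec (vec n (\<lambda>j. d $ j * c $ j))"
  then have j: "j < n" by simp
  have "(diag_of_vec d *\<^sub>v c) $ j = (\<Sum>k\<in>{0..<n}. (if j = k then d $ j else 0) * c $ k)"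
    using assms j unfolding diag_of_vec_def by (auto simp: scalar_prod_def)
  also have "\<dots> = (\<Sum>k\<in>{0..<n}. if k = j then d $ j * c $ k else 0)"
    by (rule sum.cong) auto
  finally show "(diag_of_vec d *\<^sub>v c) $ j = vec n (\<lambda>j. d $ j * c $ j) $ j" using j by simp
qed (use assms in \<open>auto simp: diag_of_vec_def\<close>)

lemma diag_of_vec_vCons:
  "diag_of_vec (vCons e d)
    = four_block_mat (mat 1 1 (\<lambda>_. e)) (0\<^sub>m 1 (dim_vec d)) (0\<^sub>m (dim_vec d) 1) (diag_of_vec d)"
  unfolding diag_of_vec_def by (rule eq_matI) (auto simp: vec_index_vCons)

lemma unitary_conjugation:
  assumes W: "unitary_mat W n" and A: "A \<in> carrier_mat n n"
  shows "A = W * (mat_adjoint W * A * W) * mat_adjoint W"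
proof -
  have Wc: "W \<in> carrier_mat n n" and WW: "W * mat_adjoint W = 1\<^sub>m n"
    using W unitary_mat_right_inverse[OF W] unfolding unitary_mat_def by auto
  have "W * (mat_adjoint W * A * W) * mat_adjoint W
      = (W * mat_adjoint W) * A * (W * mat_adjoint W)"
    using Wc A by (simp add: assoc_mult_mat[of _ n n _ n _ n] mult_carrier_mat[of _ n n _ n])
  then show ?thesis using WW A by simp
qed

lemma hermitian_first_col_block:
  fixes A :: "complex mat"
  assumes A: "A \<in> carrier_mat (Suc k) (Suc k)" and Ah: "mat_adjoint A = A"
    and col0: "\<And>i. i < Suc k \<Longrightarrow> A $$ (i,0) = (if i = 0 then e else 0)"
  shows "\<exists>H'. H' \<in> carrier_mat k k \<and> mat_adjoint H' = H' \<and>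
           A = four_block_mat (mat 1 1 (\<lambda>_. e)) (0\<^sub>m 1 k) (0\<^sub>m k 1) H'"
proof -
  have row0: "A $$ (0,j) = (if j = 0 then e else 0)" if j: "j < Suc k" for j
  proof -
    have "A $$ (0,j) = cnj (A $$ (j,0))"
      using A j arg_cong[OF Ah, of "\<lambda>M. M $$ (0,j)"] by simp
    moreover have "cnj e = e"
      using A col0[of 0] arg_cong[OF Ah, of "\<lambda>M. M $$ (0,0)"] by simp
    ultimately show ?thesis using col0[OF j] by simp
  qed
  define H' where "H' = mat k k (\<lambda>(i,j). A $$ (Suc i, Suc j))"
  have H': "H' \<in> carrier_mat k k" unfolding H'_def by auto
  have H'h: "mat_adjoint H' = H'"
    unfolding H'_def using A arg_cong[OF Ah, of "\<lambda>M. M $$ (_, _)"]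
    by (intro eq_matI) (auto, metis Ah Suc_mono carrier_matD conjugate_complex_def mat_adjoint_index)
  have "A = four_block_mat (mat 1 1 (\<lambda>_. e)) (0\<^sub>m 1 k) (0\<^sub>m k 1) H'"
  proof (rule eq_matI)
    fix i j assume "i < dim_row (four_block_mat (mat 1 1 (\<lambda>_. e)) (0\<^sub>m 1 k) (0\<^sub>m k 1) H')"
      "j < dim_col (four_block_mat (mat 1 1 (\<lambda>_. e)) (0\<^sub>m 1 k) (0\<^sub>m k 1) H')"
    then have i: "i < Suc k" and j: "j < Suc k" using H' by auto
    show "A $$ (i,j) = four_block_mat (mat 1 1 (\<lambda>_. e)) (0\<^sub>m 1 k) (0\<^sub>m k 1) H' $$ (i,j)"
      using row0[OF j] col0[OF i] i j H' by (cases i; cases j) (auto simp: H'_def)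
  qed (use A H' in auto)
  then show ?thesis using H' H'h by blast
qed

lemma hermitian_deflation:
  fixes H :: "complex mat"
  assumes H: "H \<in> carrier_mat (Suc k) (Suc k)" and Hh: "mat_adjoint H = H"
  shows "\<exists>W e H'. unitary_mat W (Suc k) \<and> H' \<in> carrier_mat k k \<and> mat_adjoint H' = H' \<and>
           mat_adjoint W * H * W = four_block_mat (mat 1 1 (\<lambda>_. e)) (0\<^sub>m 1 k) (0\<^sub>m k 1) H'"
proof -
  obtain e v where v: "v \<in> carrier_vec (Suc k)" "sqnorm v = 1" and Hv: "H *\<^sub>v v = e \<cdot>\<^sub>v v"
    using exists_unit_eigenvector[OF H] by blast
  obtain W where uW: "unitary_mat W (Suc k)" and W0: "col W 0 = v"
    using unitary_completion[OF v] by blast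
  have W: "W \<in> carrier_mat (Suc k) (Suc k)" and WW: "mat_adjoint W * W = 1\<^sub>m (Suc k)"
    using uW unfolding unitary_mat_def by auto
  define A where "A = mat_adjoint W * H * W"
  have A: "A \<in> carrier_mat (Suc k) (Suc k)" unfolding A_def using W H by auto
  have Ah: "mat_adjoint A = A"
    unfolding A_def using W H
    by (simp add: mat_adjoint_mult[of _ "Suc k" "Suc k" _ "Suc k"] Hh assoc_mult_mat[of _ "Suc k" "Suc k"])
  have col0: "A $$ (i,0) = (if i = 0 then e else 0)" if i: "i < Suc k" for i
  proof -
    have "A $$ (i,0) = row (mat_adjoint W) i \<bullet> col (H * W) 0"
      unfolding A_def using i W H by (simp add: assoc_mult_mat[of _ "Suc k" "Suc k"])
    also have "col (H * W) 0 = H *\<^sub>v col W 0"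
      by (rule col_mult2[OF H W]) simp
    also have "row (mat_adjoint W) i \<bullet> (H *\<^sub>v col W 0) = e * (row (mat_adjoint W) i \<bullet> col W 0)"
      using W i W0 Hv v by (simp add: scalar_prod_smult_distrib[of _ "Suc k"])
    also have "row (mat_adjoint W) i \<bullet> col W 0 = (if i = 0 then 1 else 0)"
      using W i WW by (metis index_mult_mat(1) index_one_mat(1) mat_adjoint_dim(1) carrier_matD(2) zero_less_Suc)
    finally show ?thesis by simp
  qed
  obtain H' where "H' \<in> carrier_mat k k" "mat_adjoint H' = H'"
    "A = four_block_mat (mat 1 1 (\<lambda>_. e)) (0\<^sub>m 1 k) (0\<^sub>m k 1) H'"
    using hermitian_first_col_block[OF A Ah col0] by blast
  then show ?thesis using uW unfolding A_def by blast
qed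

theorem hermitian_unitary_diagonalization:
  fixes H :: "complex mat"
  assumes "H \<in> carrier_mat n n" "mat_adjoint H = H"
  shows "\<exists>U d. unitary_mat U n \<and> d \<in> carrier_vec n \<and> H = U * diag_of_vec d * mat_adjoint U"
  using assms
proof (induction n arbitrary: H)
  case 0
  then show ?case
    by (intro exI[of _ "1\<^sub>m 0"] exI[of _ "vNil"]) (auto simp: unitary_mat_def)
next
  case (Suc k H)
  obtain W e H' where W: "unitary_mat W (Suc k)" and H': "H' \<in> carrier_mat k k" "mat_adjoint H' = H'"
    and WHW: "mat_adjoint W * H * W = four_block_mat (mat 1 1 (\<lambda>_. e)) (0\<^sub>m 1 k) (0\<^sub>m k 1) H'"
    using hermitian_deflation[OF Suc.prems] by blast
  obtain V d where V: "unitary_mat V k" and d: "d \<in> carrier_vec k"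
    and H'd: "H' = V * diag_of_vec d * mat_adjoint V"
    using Suc.IH[OF H'] by blast
  have Vc: "V \<in> carrier_mat k k" using V unfolding unitary_mat_def by auto
  define P where "P = four_block_mat (1\<^sub>m 1) (0\<^sub>m 1 k) (0\<^sub>m k 1) V"
  have P: "unitary_mat P (Suc k)" unfolding P_def by (rule unitary_mat_four_block_one[OF V])
  have Pc: "P \<in> carrier_mat (Suc k) (Suc k)" using P unfolding unitary_mat_def by auto
  have Wc: "W \<in> carrier_mat (Suc k) (Suc k)" using W unfolding unitary_mat_def by auto
  define D where "D = diag_of_vec (vCons e d)"
  have D: "D \<in> carrier_mat (Suc k) (Suc k)" unfolding D_def using d by simp
  have E: "mat 1 1 (\<lambda>_. e) \<in> carrier_mat 1 1" by simp
  have Dd: "diag_of_vec d \<in> carrier_mat k k" using d by simp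
  have "P * D = four_block_mat (mat 1 1 (\<lambda>_. e)) (0\<^sub>m 1 k) (0\<^sub>m k 1) (V * diag_of_vec d)"
    unfolding P_def D_def diag_of_vec_vCons carrier_vecD[OF d]
    by (subst mult_four_block_mat[of _ 1 1 _ k _ k _ _ 1 _ k]) (use Vc E Dd in auto)
  also have "\<dots> * mat_adjoint P = four_block_mat (mat 1 1 (\<lambda>_. e)) (0\<^sub>m 1 k) (0\<^sub>m k 1) H'"
    unfolding P_def mat_adjoint_four_block_diag[OF one_carrier_mat Vc] H'd
    by (subst mult_four_block_mat[of _ 1 1 _ k _ k _ _ 1 _ k]) (use Vc E Dd in auto)
  finally have "four_block_mat (mat 1 1 (\<lambda>_. e)) (0\<^sub>m 1 k) (0\<^sub>m k 1) H' = P * D * mat_adjoint P" ..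
  then have "H = W * (P * D * mat_adjoint P) * mat_adjoint W"
    using unitary_conjugation[OF W Suc.prems(1)] WHW by simp
  also have "\<dots> = (W * P) * D * mat_adjoint (W * P)"
    using Wc Pc D
    by (simp add: mat_adjoint_mult[OF Wc Pc] assoc_mult_mat[of _ "Suc k" "Suc k" _ "Suc k" _ "Suc k"]
        mult_carrier_mat[of _ "Suc k" "Suc k" _ "Suc k"])
  finally show ?case
    using unitary_mat_mult[OF W P] d unfolding D_def by (intro exI[of _ "W * P"] exI[of _ "vCons e d"]) auto
qed

lemma proots_prod_linear_factors: "proots (\<Prod>a\<leftarrow>xs. [:- a, 1:]) = mset (xs :: complex list)"
proof (induction xs)
  case (Cons a xs)
  have "proots (\<Prod>a\<leftarrow>a # xs. [:- a, 1:]) = proots ([:- a, 1:] * (\<Prod>a\<leftarrow>xs. [:- a, 1:]))"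
    by simp
  also have "\<dots> = proots [:- a, 1:] + proots (\<Prod>a\<leftarrow>xs. [:- a, 1:])"
    by (rule proots_mult) auto
  finally show ?case unfolding Cons.IH proots_linear_factor by simp
qed simp

locale unitary_diagonalization =
  fixes C U :: "complex mat" and d :: "complex vec" and N :: nat
  assumes unitary: "unitary_mat U N" and d_carrier: "d \<in> carrier_vec N"
    and C_eq: "C = U * diag_of_vec d * mat_adjoint U"
begin

definition coord :: "complex vec \<Rightarrow> complex vec" where
  "coord z = mat_adjoint U *\<^sub>v z"

lemma U_carrier: "U \<in> carrier_mat N N"
  using unitary unfolding unitary_mat_def by auto

lemma adjoint_U_carrier: "mat_adjoint U \<in> carrier_mat N N"
  using U_carrier by simp

lemma D_carrier: "diag_of_vec d \<in> carrier_mat N N"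
  using d_carrier by simp

lemma C_carrier: "C \<in> carrier_mat N N"
  unfolding C_eq by (rule mult_carrier_mat[OF mult_carrier_mat[OF U_carrier D_carrier] adjoint_U_carrier])

lemma dim_coord [simp]: "dim_vec (coord z) = N"
  unfolding coord_def using carrier_matD[OF U_carrier] by simp

lemma coord_carrier [simp]: "coord z \<in> carrier_vec N"
  unfolding carrier_vec_def by simp

lemma col_U_carrier [simp]: "col U j \<in> carrier_vec N"
  using col_dim[of U j] carrier_matD(1)[OF U_carrier] by simp

lemma C_mult_vec:
  assumes z: "z \<in> carrier_vec N"
  shows "C *\<^sub>v z = U *\<^sub>v (diag_of_vec d *\<^sub>v coord z)"
proof -
  have "C *\<^sub>v z = (U * diag_of_vec d) *\<^sub>v coord z"
    unfolding C_eq coord_def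
    by (rule assoc_mult_mat_vec[OF mult_carrier_mat[OF U_carrier D_carrier] adjoint_U_carrier z])
  also have "\<dots> = U *\<^sub>v (diag_of_vec d *\<^sub>v coord z)"
    by (rule assoc_mult_mat_vec[OF U_carrier D_carrier coord_carrier])
  finally show ?thesis .
qed

lemma cscalar_prod_coord:
  assumes "z \<in> carrier_vec N" "w \<in> carrier_vec N"
  shows "coord z \<bullet>c coord w = z \<bullet>c w"
proof -
  have "coord z \<bullet>c coord w = z \<bullet>c (U *\<^sub>v coord w)"
    unfolding coord_def[of z]
    using cscalar_prod_mat_adjoint[OF adjoint_U_carrier assms(1) coord_carrier] by simp
  also have "U *\<^sub>v coord w = (U * mat_adjoint U) *\<^sub>v w"
    unfolding coord_def by (rule assoc_mult_mat_vec[OF U_carrier adjoint_U_carrier assms(2), symmetric])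
  finally show ?thesis using assms unitary_mat_right_inverse[OF unitary] by simp
qed

lemma coord_col_U: "j < N \<Longrightarrow> coord (col U j) = unit_vec N j"
  unfolding coord_def using col_mult2[OF adjoint_U_carrier U_carrier, of j] unitary
  by (simp add: unitary_mat_def)

lemma coord_C:
  assumes z: "z \<in> carrier_vec N" and j: "j < N"
  shows "coord (C *\<^sub>v z) $ j = d $ j * coord z $ j"
proof -
  have Dz: "diag_of_vec d *\<^sub>v coord z \<in> carrier_vec N" using D_carrier by simp
  have "coord (C *\<^sub>v z) = (mat_adjoint U * U) *\<^sub>v (diag_of_vec d *\<^sub>v coord z)"
    unfolding C_mult_vec[OF z] coord_def[of "U *\<^sub>v _"]
    by (rule assoc_mult_mat_vec[OF adjoint_U_carrier U_carrier Dz, symmetric])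
  then show ?thesis
    using unitary Dz j d_carrier unfolding unitary_mat_def by (simp add: diag_of_vec_mult_vec)
qed

lemma sqnorm_eq_sum_coord: "z \<in> carrier_vec N \<Longrightarrow> sqnorm z = (\<Sum>j<N. (cmod (coord z $ j))\<^sup>2)"
  using cscalar_prod_coord[of z z] sqnorm_eq_sum[of "coord z"] unfolding sqnorm_def by simp

lemma cscalar_prod_eq_sum_coord:
  "z \<in> carrier_vec N \<Longrightarrow> w \<in> carrier_vec N \<Longrightarrow> z \<bullet>c w = (\<Sum>j<N. coord z $ j * cnj (coord w $ j))"
  using cscalar_prod_coord[of z w] unfolding cscalar_prod_eq_sum by simp

lemma C_quadratic_form:
  assumes "z \<in> carrier_vec N"
  shows "(C *\<^sub>v z) \<bullet>c z = (\<Sum>j<N. d $ j * complex_of_real ((cmod (coord z $ j))\<^sup>2))"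
proof -
  have "(C *\<^sub>v z) \<bullet>c z = (\<Sum>j<N. d $ j * (coord z $ j * cnj (coord z $ j)))"
    using assms C_carrier by (simp add: cscalar_prod_eq_sum_coord coord_C mult.assoc)
  then show ?thesis by (simp add: complex_mult_cnj cmod_power2 flip: of_real_power)
qed

lemma orthonormal_col_U:
  assumes "j < N" "k < N"
  shows "col U j \<bullet>c col U k = (if j = k then 1 else 0)"
proof -
  have "col U j \<bullet>c col U k = (mat_adjoint U * U) $$ (k,j)"
    using mat_adjoint_mult_index[OF U_carrier assms(2,1)] ..
  then show ?thesis using unitary assms unfolding unitary_mat_def by auto
qed

lemma eigenvector_col_U:
  assumes j: "j < N"
  shows "C *\<^sub>v col U j = d $ j \<cdot>\<^sub>v col U j"
proof -
  have "diag_of_vec d *\<^sub>v unit_vec N j = d $ j \<cdot>\<^sub>v unit_vec N j"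
    using d_carrier j by (intro eq_vecI) (auto simp: diag_of_vec_mult_vec)
  then have "C *\<^sub>v col U j = d $ j \<cdot>\<^sub>v (U *\<^sub>v unit_vec N j)"
    using j U_carrier by (simp add: C_mult_vec coord_col_U mult_mat_vec[of _ N N])
  also have "U *\<^sub>v unit_vec N j = col U j"
    using col_mult2[OF U_carrier one_carrier_mat j] j U_carrier by simp
  finally show ?thesis .
qed

lemma proots_char_poly: "proots (char_poly C) = mset (list_of_vec d)"
proof -
  have "similar_mat C (diag_of_vec d)"
    using C_carrier D_carrier U_carrier adjoint_U_carrier unitary unitary_mat_right_inverse[OF unitary]
    by (intro similar_matI[of C _ U "mat_adjoint U" N]) (auto simp: C_eq unitary_mat_def)
  then have "char_poly C = char_poly (diag_of_vec d)" by (rule char_poly_similar)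
  also have "\<dots> = (\<Prod>a\<leftarrow>diag_mat (diag_of_vec d). [:- a, 1:])"
    by (rule char_poly_upper_triangular[OF D_carrier]) (auto simp: diag_of_vec_def upper_triangular_def)
  also have "diag_mat (diag_of_vec d) = list_of_vec d"
    using d_carrier unfolding diag_mat_def diag_of_vec_def by (auto intro: nth_equalityI)
  finally show ?thesis by (simp add: proots_prod_linear_factors)
qed

end

section \<open>The second singular value of a norm-attaining contraction\<close>

lemma sum_lessThan_single:
  fixes f :: "nat \<Rightarrow> 'a :: comm_monoid_add"
  assumes "j0 < N" "\<And>j. j < N \<Longrightarrow> j \<noteq> j0 \<Longrightarrow> f j = 0"
  shows "(\<Sum>j<N. f j) = f j0"
  using assms by (subst sum.cong[OF refl, of _ _ "\<lambda>j. if j = j0 then f j else 0"]) auto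

lemma sorted_le_last:
  assumes "sorted xs" "y \<in> set xs"
  shows "y \<le> last xs"
proof -
  obtain i where i: "i < length xs" "xs ! i = y" using assms(2) by (auto simp: in_set_conv_nth)
  then have "xs ! i \<le> xs ! (length xs - 1)" using assms(1) by (intro sorted_nth_mono) auto
  moreover have "last xs = xs ! (length xs - 1)" using i by (intro last_conv_nth) auto
  ultimately show ?thesis using i by simp
qed

lemma set_take_drop_Suc:
  assumes j0: "j0 < length xs"
  shows "set (take j0 xs @ drop (Suc j0) xs) = {xs ! j |j. j < length xs \<and> j \<noteq> j0}"
proof (intro equalityI subsetI)
  fix y assume "y \<in> set (take j0 xs @ drop (Suc j0) xs)"
  then have "y \<in> set (take j0 xs) \<or> y \<in> set (drop (Suc j0) xs)" by simp
  then show "y \<in> {xs ! j |j. j < length xs \<and> j \<noteq> j0}"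
  proof
    assume "y \<in> set (take j0 xs)"
    then obtain i where "i < j0" "y = xs ! i" using j0 by (auto simp: in_set_conv_nth)
    then show ?thesis using j0 by force
  next
    assume "y \<in> set (drop (Suc j0) xs)"
    then obtain i where "i < length xs - Suc j0" "y = xs ! (Suc j0 + i)"
      by (auto simp: in_set_conv_nth)
    then show ?thesis by force
  qed
next
  fix y assume "y \<in> {xs ! j |j. j < length xs \<and> j \<noteq> j0}"
  then obtain j where j: "j < length xs" "j \<noteq> j0" "y = xs ! j" by blast
  show "y \<in> set (take j0 xs @ drop (Suc j0) xs)"
  proof (cases "j < j0")
    case True
    then show ?thesis using j by (auto simp: in_set_conv_nth intro!: exI[of _ j])
  next
    case False
    then have "y = drop (Suc j0) xs ! (j - Suc j0)" "j - Suc j0 < length (drop (Suc j0) xs)"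
      using j by auto
    then show ?thesis by (metis UnI2 nth_mem set_append)
  qed
qed

lemma second_largest_of_sort:
  fixes xs :: "real list"
  assumes j0: "j0 < length xs" and top: "\<forall>j<length xs. xs ! j \<le> xs ! j0" and len: "2 \<le> length xs"
  shows "\<exists>j1<length xs. j1 \<noteq> j0 \<and> rev (sort xs) ! 1 = xs ! j1 \<and>
           (\<forall>j<length xs. j \<noteq> j0 \<longrightarrow> xs ! j \<le> xs ! j1)"
proof -
  define ys where "ys = take j0 xs @ drop (Suc j0) xs"
  have "mset (take j0 xs @ xs ! j0 # drop (Suc j0) xs) = mset (ys @ [xs ! j0])"
    unfolding ys_def by (simp add: ac_simps)
  then have "mset xs = mset (ys @ [xs ! j0])"
    using id_take_nth_drop[OF j0] by simp
  moreover have "\<forall>y\<in>set ys. y \<le> xs ! j0"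
    using top unfolding ys_def by (auto simp: in_set_conv_nth nth_append)
  ultimately have sort_xs: "sort xs = sort ys @ [xs ! j0]"
    by (intro properties_for_sort) (auto simp: sorted_append)
  have "length (sort ys) = length xs - 1" unfolding ys_def using j0 by simp
  then have "sort ys \<noteq> []" using len by (auto simp del: length_sort)
  define v where "v = last (sort ys)"
  have second: "rev (sort xs) ! 1 = v"
    unfolding sort_xs v_def using \<open>sort ys \<noteq> []\<close> by (simp add: hd_rev[symmetric] hd_conv_nth)
  have v_max: "y \<in> set ys \<Longrightarrow> y \<le> v" for y
    unfolding v_def by (rule sorted_le_last) auto
  have set_ys: "set ys = {xs ! j |j. j < length xs \<and> j \<noteq> j0}"
    unfolding ys_def by (rule set_take_drop_Suc[OF j0])
  have "v \<in> set ys" unfolding v_def using last_in_set[OF \<open>sort ys \<noteq> []\<close>] by simp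
  then obtain j1 where "j1 < length xs" "j1 \<noteq> j0" "xs ! j1 = v" unfolding set_ys by blast
  then show ?thesis using second v_max set_ys by (intro exI[of _ j1]) auto
qed

text \<open>Complex vectors are needed only to speak about an eigenbasis of the Gram matrix
  \<open>M\<^sup>T M\<close>; real vectors enter through \<open>map_vec complex_of_real\<close>.\<close>

locale norming_contraction = unitary_diagonalization C U d N for C U d N +
  fixes M :: "real mat" and p :: nat and g :: "real vec"
  assumes M_carrier: "M \<in> carrier_mat p N"
    and C_gram: "C = map_mat complex_of_real (transpose_mat M * M)"
    and contraction: "\<And>u. u \<in> carrier_vec p \<Longrightarrow> rnorm (transpose_mat M *\<^sub>v u) \<le> rnorm u"
    and g_carrier: "g \<in> carrier_vec p" and g_unit: "rnorm g = 1"
    and norming: "rnorm (transpose_mat M *\<^sub>v g) = 1"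
begin

abbreviation "Mc \<equiv> map_mat complex_of_real M"
abbreviation "Mt \<equiv> map_mat complex_of_real (transpose_mat M)"
abbreviation "gc \<equiv> map_vec complex_of_real g"

definition gram_ev :: "nat \<Rightarrow> real" where
  "gram_ev j = Re (d $ j)"

lemma Mc_carrier: "Mc \<in> carrier_mat p N"
  using M_carrier by simp

lemma Mt_carrier: "Mt \<in> carrier_mat N p"
  using M_carrier by simp

lemma Mc_mult_carrier [simp]: "x \<in> carrier_vec N \<Longrightarrow> Mc *\<^sub>v x \<in> carrier_vec p"
  using Mc_carrier by simp

lemma Mt_mult_carrier [simp]: "x \<in> carrier_vec p \<Longrightarrow> Mt *\<^sub>v x \<in> carrier_vec N"
  using Mt_carrier by simp

lemma gc_carrier [simp]: "gc \<in> carrier_vec p"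
  using g_carrier by simp

lemma mat_adjoint_Mc: "mat_adjoint Mc = Mt"
  by (rule eq_matI) auto

lemma cscalar_prod_Mc:
  "x \<in> carrier_vec N \<Longrightarrow> y \<in> carrier_vec p \<Longrightarrow> (Mc *\<^sub>v x) \<bullet>c y = x \<bullet>c (Mt *\<^sub>v y)"
  using cscalar_prod_mat_adjoint[OF Mc_carrier] by (simp add: mat_adjoint_Mc)

lemma cscalar_prod_Mt:
  "x \<in> carrier_vec p \<Longrightarrow> y \<in> carrier_vec N \<Longrightarrow> (Mt *\<^sub>v x) \<bullet>c y = x \<bullet>c (Mc *\<^sub>v y)"
  using cscalar_prod_mat_adjoint[OF Mt_carrier] mat_adjoint_Mc
  by (metis mat_adjoint_adjoint)

lemma C_eq_Mt_Mc: "C = Mt * Mc"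
  unfolding C_gram using M_carrier by (simp add: of_real_hom.mat_hom_mult[of _ N p _ N])

lemma C_mult: "z \<in> carrier_vec N \<Longrightarrow> C *\<^sub>v z = Mt *\<^sub>v (Mc *\<^sub>v z)"
  unfolding C_eq_Mt_Mc by (rule assoc_mult_mat_vec[OF Mt_carrier Mc_carrier])

lemma sqnorm_Mt_le:
  assumes z: "z \<in> carrier_vec p"
  shows "sqnorm (Mt *\<^sub>v z) \<le> sqnorm z"
proof -
  have M: "transpose_mat M \<in> carrier_mat N p" using M_carrier by simp
  have "(rnorm (transpose_mat M *\<^sub>v map_vec f z))\<^sup>2 \<le> (rnorm (map_vec f z))\<^sup>2" for f
    using contraction[of "map_vec f z"] z rnorm_nonneg by (simp add: power_mono)
  then show ?thesis
    unfolding sqnorm_Re_Im[of z] sqnorm_Re_Im[of "Mt *\<^sub>v z"] Re_of_real_mat_mult_vec[OF M z]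
    by (intro add_mono)
qed

lemma sqnorm_Mt_gc: "sqnorm (Mt *\<^sub>v gc) = 1"
  using norming M_carrier g_carrier
  by (simp add: of_real_mat_mult_vec[of _ N p] sqnorm_of_real_vec)

lemma cscalar_prod_gc_self: "gc \<bullet>c gc = 1"
  using g_unit cscalar_prod_self[of gc] sqnorm_of_real_vec[of g] by simp

lemma d_eq_sqnorm: "j < N \<Longrightarrow> d $ j = complex_of_real (sqnorm (Mc *\<^sub>v col U j))"
  using eigenvector_col_U[of j] orthonormal_col_U[of j j] C_mult[of "col U j"]
    cscalar_prod_Mt[of "Mc *\<^sub>v col U j" "col U j"]
  by (simp add: cscalar_prod_smult_left[of _ N] cscalar_prod_self)

lemma d_eq_gram_ev: "j < N \<Longrightarrow> d $ j = complex_of_real (gram_ev j)"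
  unfolding gram_ev_def using d_eq_sqnorm by simp

lemma gram_ev_nonneg: "j < N \<Longrightarrow> gram_ev j \<ge> 0"
  unfolding gram_ev_def using d_eq_sqnorm sqnorm_nonneg by simp

lemma gram_ev_le_1:
  assumes j: "j < N"
  shows "gram_ev j \<le> 1"
proof -
  let ?w = "Mc *\<^sub>v col U j"
  have "Mt *\<^sub>v ?w = complex_of_real (gram_ev j) \<cdot>\<^sub>v col U j"
    using C_mult[of "col U j"] eigenvector_col_U[OF j] d_eq_gram_ev[OF j] by simp
  moreover have "sqnorm (col U j) = 1"
    using orthonormal_col_U[OF j j] by (simp add: sqnorm_def)
  ultimately have "sqnorm (Mt *\<^sub>v ?w) = (gram_ev j)\<^sup>2"
    by (simp add: sqnorm_smult)
  moreover have "sqnorm ?w = gram_ev j" using d_eq_sqnorm[OF j] unfolding gram_ev_def by simp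
  ultimately have "(gram_ev j)\<^sup>2 \<le> gram_ev j" using sqnorm_Mt_le[of ?w] by simp
  then show ?thesis
    unfolding power2_eq_square mult_le_cancel_left2 by linarith
qed

lemma sqnorm_Mc_eq_sum:
  assumes z: "z \<in> carrier_vec N"
  shows "sqnorm (Mc *\<^sub>v z) = (\<Sum>j<N. gram_ev j * (cmod (coord z $ j))\<^sup>2)"
proof -
  have "(Mc *\<^sub>v z) \<bullet>c (Mc *\<^sub>v z) = (C *\<^sub>v z) \<bullet>c z"
    using z by (simp add: C_mult cscalar_prod_Mt)
  then show ?thesis
    unfolding sqnorm_def C_quadratic_form[OF z] using d_eq_gram_ev by simp
qed

lemma sqnorm_Mc_le: "z \<in> carrier_vec N \<Longrightarrow> sqnorm (Mc *\<^sub>v z) \<le> sqnorm z"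
  unfolding sqnorm_Mc_eq_sum sqnorm_eq_sum_coord
  by (intro sum_mono mult_left_le_one_le) (auto simp: gram_ev_le_1 gram_ev_nonneg)

text \<open>Since \<open>\<parallel>M\<^sup>T g\<parallel> = 1\<close> while both \<open>M\<close> and \<open>M\<^sup>T\<close> are contractions, \<open>M M\<^sup>T g\<close> has norm at
  most one and inner product one with \<open>g\<close>, so it equals \<open>g\<close>.\<close>

lemma Mc_Mt_gc: "Mc *\<^sub>v (Mt *\<^sub>v gc) = gc"
proof -
  define x where "x = Mc *\<^sub>v (Mt *\<^sub>v gc)"
  have x: "x \<in> carrier_vec p" unfolding x_def by (rule Mc_mult_carrier[OF Mt_mult_carrier[OF gc_carrier]])
  have "x \<bullet>c gc = 1"
    unfolding x_def cscalar_prod_Mc[OF Mt_mult_carrier[OF gc_carrier] gc_carrier]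
    using sqnorm_Mt_gc by (simp add: cscalar_prod_self)
  moreover have "sqnorm x \<le> 1"
    unfolding x_def using sqnorm_Mc_le[OF Mt_mult_carrier[OF gc_carrier]] sqnorm_Mt_gc by simp
  ultimately have "sqnorm (x - gc) \<le> 0"
    using sqnorm_diff[OF x gc_carrier] cscalar_prod_gc_self by (simp add: sqnorm_def)
  then have diff: "x - gc = 0\<^sub>v p"
    using sqnorm_eq_0_iff[of "x - gc" p] sqnorm_nonneg[of "x - gc"] x g_carrier by simp
  show ?thesis unfolding x_def[symmetric]
  proof (rule eq_vecI)
    fix i assume i: "i < dim_vec gc"
    then have "(x - gc) $ i = 0" using diff g_carrier by simp
    then show "x $ i = gc $ i" using i x g_carrier by simp
  qed (use x g_carrier in simp)
qed

lemma exists_gram_ev_1: "\<exists>j0<N. d $ j0 = 1"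
proof (rule ccontr)
  assume none: "\<not> ?thesis"
  let ?h = "Mt *\<^sub>v gc"
  have h: "?h \<in> carrier_vec N" by (rule Mt_mult_carrier[OF gc_carrier])
  have "coord ?h $ j = d $ j * coord ?h $ j" if "j < N" for j
    using coord_C[OF h that] C_mult[OF h] Mc_Mt_gc by simp
  then have "coord ?h $ j = 0" if "j < N" for j
    using none that by (metis mult_cancel_right2)
  then have "sqnorm ?h = 0" by (simp add: sqnorm_eq_sum_coord[OF h])
  then show False using sqnorm_Mt_gc by simp
qed

lemma norming_direction_carrier: "Mt *\<^sub>v gc \<in> carrier_vec N"
  by (rule Mt_mult_carrier[OF gc_carrier])

lemma coord_norming_direction: "j < N \<Longrightarrow> coord (Mt *\<^sub>v gc) $ j = d $ j * coord (Mt *\<^sub>v gc) $ j"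
  using coord_C[OF norming_direction_carrier] C_mult[OF norming_direction_carrier] Mc_Mt_gc by simp

lemma sqnorm_Mt_square_le:
  assumes u: "u \<in> carrier_vec p" "sqnorm u = 1"
  shows "(sqnorm (Mt *\<^sub>v u))\<^sup>2 \<le> sqnorm (Mc *\<^sub>v (Mt *\<^sub>v u))"
proof -
  let ?y = "Mt *\<^sub>v u"
  have y: "?y \<in> carrier_vec N" using u by simp
  have "sqnorm ?y = Re (u \<bullet>c (Mc *\<^sub>v ?y))"
    unfolding sqnorm_def using cscalar_prod_Mt[OF u(1) y] by simp
  also have "\<dots> \<le> cmod (u \<bullet>c (Mc *\<^sub>v ?y))" by (rule complex_Re_le_cmod)
  finally have "(sqnorm ?y)\<^sup>2 \<le> (cmod (u \<bullet>c (Mc *\<^sub>v ?y)))\<^sup>2"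
    using sqnorm_nonneg by (intro power_mono) auto
  also have "\<dots> \<le> sqnorm (Mc *\<^sub>v ?y)"
    using cauchy_schwarz_cscalar_prod[OF u(1) Mc_mult_carrier[OF y]] u(2) by simp
  finally show ?thesis .
qed

lemma coord_orthogonal_to_norming_direction:
  assumes j0: "j0 < N" and simple: "\<And>j. j < N \<Longrightarrow> j \<noteq> j0 \<Longrightarrow> d $ j \<noteq> 1"
    and y: "y \<in> carrier_vec N" "y \<bullet>c (Mt *\<^sub>v gc) = 0"
  shows "coord y $ j0 = 0"
proof -
  let ?h = "Mt *\<^sub>v gc"
  have h0: "coord ?h $ j = 0" if "j < N" "j \<noteq> j0" for j
    using coord_norming_direction[OF that(1)] simple[OF that] by (metis mult_cancel_right2)
  have "coord ?h $ j0 \<noteq> 0"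
  proof
    assume "coord ?h $ j0 = 0"
    then have "sqnorm ?h = 0"
      unfolding sqnorm_eq_sum_coord[OF norming_direction_carrier] using h0 j0
      by (subst sum_lessThan_single[of j0]) auto
    then show False using sqnorm_Mt_gc by simp
  qed
  moreover have "y \<bullet>c ?h = coord y $ j0 * cnj (coord ?h $ j0)"
    unfolding cscalar_prod_eq_sum_coord[OF y(1) norming_direction_carrier] using h0 j0
    by (subst sum_lessThan_single[of j0]) auto
  ultimately show ?thesis using y(2) by simp
qed

text \<open>The upper bound: \<open>M\<^sup>T u\<close> is orthogonal to \<open>M\<^sup>T g\<close>, which spans the eigenspace of the
  simple top eigenvalue, so \<open>M\<^sup>T u\<close> only sees eigenvalues at most \<open>m\<close>.\<close>

lemma sqnorm_Mt_orthogonal_le: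
  assumes j0: "j0 < N" "d $ j0 = 1" and m: "0 \<le> m" "\<And>j. j < N \<Longrightarrow> j \<noteq> j0 \<Longrightarrow> gram_ev j \<le> m"
    and u: "u \<in> carrier_vec p" "u \<bullet>c gc = 0" "sqnorm u = 1"
  shows "sqnorm (Mt *\<^sub>v u) \<le> m"
proof (cases "m < 1")
  case False
  then show ?thesis using sqnorm_Mt_le[OF u(1)] u(3) by simp
next
  case True
  let ?y = "Mt *\<^sub>v u"
  have y: "?y \<in> carrier_vec N" using u by simp
  have "?y \<bullet>c (Mt *\<^sub>v gc) = 0"
    using cscalar_prod_Mt[OF u(1) norming_direction_carrier] Mc_Mt_gc u(2) by simp
  moreover have "d $ j \<noteq> 1" if "j < N" "j \<noteq> j0" for j
    using m(2)[OF that] True d_eq_gram_ev[OF that(1)] by auto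
  ultimately have y0: "coord ?y $ j0 = 0"
    using coord_orthogonal_to_norming_direction[OF j0(1) _ y] by blast
  have "sqnorm (Mc *\<^sub>v ?y) \<le> m * sqnorm ?y"
    unfolding sqnorm_Mc_eq_sum[OF y] sqnorm_eq_sum_coord[OF y] sum_distrib_left
  proof (rule sum_mono)
    fix j assume "j \<in> {..<N}"
    then show "gram_ev j * (cmod (coord ?y $ j))\<^sup>2 \<le> m * (cmod (coord ?y $ j))\<^sup>2"
      using y0 m(2)[of j] by (cases "j = j0") (auto intro: mult_right_mono)
  qed
  then have "(sqnorm ?y)\<^sup>2 \<le> m * sqnorm ?y"
    using sqnorm_Mt_square_le[OF u(1,3)] by simp
  then show ?thesis
    using sqnorm_nonneg[of ?y] m(1)
    by (cases "sqnorm ?y = 0") (auto simp: power2_eq_square)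
qed

abbreviation "K \<equiv> Mc * Mt"

lemma K_carrier: "K \<in> carrier_mat p p"
  using Mc_carrier Mt_carrier by simp

lemma K_mult: "x \<in> carrier_vec p \<Longrightarrow> K *\<^sub>v x = Mc *\<^sub>v (Mt *\<^sub>v x)"
  by (rule assoc_mult_mat_vec[OF Mc_carrier Mt_carrier])

lemma K_gc: "K *\<^sub>v gc = gc"
  using K_mult[OF gc_carrier] Mc_Mt_gc by simp

lemma cscalar_prod_K_gc: "x \<in> carrier_vec p \<Longrightarrow> (K *\<^sub>v x) \<bullet>c gc = x \<bullet>c gc"
  using K_mult cscalar_prod_Mc[OF Mt_mult_carrier gc_carrier] cscalar_prod_Mt[OF _ norming_direction_carrier]
    Mc_Mt_gc by simp

lemma K_Mc_col:
  assumes j: "j < N"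
  shows "K *\<^sub>v (Mc *\<^sub>v col U j) = d $ j \<cdot>\<^sub>v (Mc *\<^sub>v col U j)"
proof -
  have "K *\<^sub>v (Mc *\<^sub>v col U j) = Mc *\<^sub>v (C *\<^sub>v col U j)"
    using K_mult[OF Mc_mult_carrier[OF col_U_carrier]] C_mult[OF col_U_carrier] by simp
  also have "\<dots> = d $ j \<cdot>\<^sub>v (Mc *\<^sub>v col U j)"
    unfolding eigenvector_col_U[OF j] by (rule mult_mat_vec[OF Mc_carrier col_U_carrier])
  finally show ?thesis .
qed

lemma cscalar_prod_Mc_col:
  assumes j: "j < N" and k: "k < N"
  shows "(Mc *\<^sub>v col U j) \<bullet>c (Mc *\<^sub>v col U k) = (if j = k then d $ k else 0)"
proof -
  have "(Mc *\<^sub>v col U j) \<bullet>c (Mc *\<^sub>v col U k) = col U j \<bullet>c (C *\<^sub>v col U k)"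
    using cscalar_prod_Mc[OF col_U_carrier Mc_mult_carrier[OF col_U_carrier]] C_mult[OF col_U_carrier]
    by simp
  also have "\<dots> = cnj (d $ k) * (col U j \<bullet>c col U k)"
    unfolding eigenvector_col_U[OF k] by (rule cscalar_prod_smult_right[OF col_U_carrier col_U_carrier])
  finally show ?thesis using orthonormal_col_U[OF j k] d_eq_gram_ev[OF k] by simp
qed

lemma real_eigenvector_attaining:
  assumes r: "r \<in> carrier_vec p" "r \<noteq> 0\<^sub>v p" and Kr: "(M * transpose_mat M) *\<^sub>v r = \<mu> \<cdot>\<^sub>v r"
    and rg: "r \<bullet> g = 0"
  shows "\<exists>u. u \<in> carrier_vec p \<and> u \<bullet> g = 0 \<and> rnorm u = 1 \<and> (rnorm (transpose_mat M *\<^sub>v u))\<^sup>2 = \<mu>"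
proof -
  have Mt: "transpose_mat M \<in> carrier_mat N p" using M_carrier by simp
  have pos: "rnorm r > 0" using rnorm_eq_0_iff[OF r(1)] rnorm_nonneg[of r] r(2) by linarith
  define u where "u = (1 / rnorm r) \<cdot>\<^sub>v r"
  have u: "u \<in> carrier_vec p" unfolding u_def using r by simp
  have u1: "rnorm u = 1" unfolding u_def rnorm_smult using pos by simp
  have "u \<bullet> g = 0" unfolding u_def using r(1) g_carrier rg by simp
  moreover have "(rnorm (transpose_mat M *\<^sub>v u))\<^sup>2 = u \<bullet> (M *\<^sub>v (transpose_mat M *\<^sub>v u))"
    unfolding rnorm_square using Mt u by (intro transpose_vec_mult_scalar[OF M_carrier]) auto
  moreover have "M *\<^sub>v (transpose_mat M *\<^sub>v u) = (M * transpose_mat M) *\<^sub>v u"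
    by (rule assoc_mult_mat_vec[OF M_carrier Mt u, symmetric])
  moreover have "(M * transpose_mat M) *\<^sub>v u = \<mu> \<cdot>\<^sub>v u"
    unfolding u_def using Kr r M_carrier by (simp add: mult_mat_vec[of _ p p] smult_smult_assoc mult.commute)
  moreover have "u \<bullet> u = 1" using u1 rnorm_square[of u] by simp
  ultimately show ?thesis using u u1 by (intro exI[of _ u]) simp
qed


text \<open>\<open>K = M M\<^sup>T\<close> is real, so the real or the imaginary part of a complex eigenvector is a real
  eigenvector.\<close>

lemma complex_eigenvector_attaining:
  assumes w: "w \<in> carrier_vec p" "w \<noteq> 0\<^sub>v p" and Kw: "K *\<^sub>v w = complex_of_real \<mu> \<cdot>\<^sub>v w"
    and wg: "w \<bullet>c gc = 0"
  shows "\<exists>u. u \<in> carrier_vec p \<and> u \<bullet> g = 0 \<and> rnorm u = 1 \<and> (rnorm (transpose_mat M *\<^sub>v u))\<^sup>2 = \<mu>"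
proof -
  have KR: "M * transpose_mat M \<in> carrier_mat p p" using M_carrier by simp
  have K_eq: "K = map_mat complex_of_real (M * transpose_mat M)"
    using M_carrier by (simp add: of_real_hom.mat_hom_mult[of _ p N _ p])
  have part: "(M * transpose_mat M) *\<^sub>v map_vec f w = \<mu> \<cdot>\<^sub>v map_vec f w \<and> map_vec f w \<bullet> g = 0"
    if f: "f = Re \<or> f = Im" for f
  proof
    have "map_vec f (complex_of_real \<mu> \<cdot>\<^sub>v w) = \<mu> \<cdot>\<^sub>v map_vec f w"
      using f by (intro eq_vecI) auto
    then show "(M * transpose_mat M) *\<^sub>v map_vec f w = \<mu> \<cdot>\<^sub>v map_vec f w"
      using f Re_of_real_mat_mult_vec[OF KR w(1)] Kw unfolding K_eq by auto
    show "map_vec f w \<bullet> g = 0"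
      using f Re_cscalar_prod_of_real_vec[OF w(1) g_carrier] wg by auto
  qed
  have "map_vec Re w \<noteq> 0\<^sub>v p \<or> map_vec Im w \<noteq> 0\<^sub>v p"
    using w by (auto simp: vec_eq_iff complex_eq_iff)
  then show ?thesis
    using real_eigenvector_attaining part w(1) by (metis map_carrier_vec)
qed

text \<open>If the top eigenvalue \<open>1\<close> is not simple, two orthonormal eigenvectors \<open>w\<^sub>0, w\<^sub>1\<close> of
  \<open>K\<close> cannot both be multiples of \<open>g\<close>; projecting one of them off \<open>g\<close> gives the
  required vector.\<close>

lemma exists_orthogonal_fixed_vector:
  assumes j0: "j0 < N" "d $ j0 = 1" and j1: "j1 < N" "d $ j1 = 1" and "j1 \<noteq> j0"
  shows "\<exists>w. w \<in> carrier_vec p \<and> w \<noteq> 0\<^sub>v p \<and> K *\<^sub>v w = complex_of_real 1 \<cdot>\<^sub>v w \<and> w \<bullet>c gc = 0"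
proof -
  define w where "w j = Mc *\<^sub>v col U j" for j
  define c where "c j = w j \<bullet>c gc" for j
  define w' where "w' j = w j - c j \<cdot>\<^sub>v gc" for j
  have wc: "w j \<in> carrier_vec p" for j unfolding w_def by simp
  have w'c: "w' j \<in> carrier_vec p" for j unfolding w'_def using wc g_carrier by simp
  have Kw': "K *\<^sub>v w' j = complex_of_real 1 \<cdot>\<^sub>v w' j" if "j < N" "d $ j = 1" for j
  proof -
    have "K *\<^sub>v w' j = K *\<^sub>v w j - K *\<^sub>v (c j \<cdot>\<^sub>v gc)"
      unfolding w'_def by (rule mult_minus_distrib_mat_vec[OF K_carrier wc]) (use g_carrier in simp)
    also have "K *\<^sub>v (c j \<cdot>\<^sub>v gc) = c j \<cdot>\<^sub>v (K *\<^sub>v gc)"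
      by (rule mult_mat_vec[OF K_carrier gc_carrier])
    finally show ?thesis
      using K_Mc_col[OF that(1)] that(2) K_gc w'c unfolding w_def w'_def by simp
  qed
  have w'g: "w' j \<bullet>c gc = 0" for j
  proof -
    have "w' j \<bullet>c gc = w j \<bullet>c gc - c j * (gc \<bullet>c gc)"
      unfolding w'_def using wc g_carrier
      by (simp add: cscalar_prod_diff_left[of _ p] cscalar_prod_smult_left[of _ p])
    then show ?thesis using cscalar_prod_gc_self unfolding c_def by simp
  qed
  have "w' j0 \<noteq> 0\<^sub>v p \<or> w' j1 \<noteq> 0\<^sub>v p"
  proof (rule ccontr)
    assume "\<not> ?thesis"
    then have "w j = c j \<cdot>\<^sub>v gc" if "j \<in> {j0, j1}" for j
      using that wc unfolding w'_def by (auto simp: vec_eq_iff)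
    then have "c j * cnj (c k) = w j \<bullet>c w k" if "j \<in> {j0, j1}" "k \<in> {j0, j1}" for j k
      using that cscalar_prod_gc_self gc_carrier
      by (simp add: cscalar_prod_smult_left[of _ p] cscalar_prod_smult_right[of _ p])
    moreover have "w j \<bullet>c w k = (if j = k then 1 else 0)" if "j \<in> {j0, j1}" "k \<in> {j0, j1}" for j k
      using that cscalar_prod_Mc_col j0 j1 unfolding w_def by auto
    ultimately have "c j0 * cnj (c j1) = 0" "c j0 * cnj (c j0) = 1" "c j1 * cnj (c j1) = 1"
      using \<open>j1 \<noteq> j0\<close> by auto
    then show False by auto
  qed
  then show ?thesis using j0 j1 w'c Kw' w'g by blast
qed

lemma exists_orthogonal_attaining:
  assumes j0: "j0 < N" "d $ j0 = 1" and j1: "j1 < N" "j1 \<noteq> j0" and pos: "0 < gram_ev j1"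
  shows "\<exists>u. u \<in> carrier_vec p \<and> u \<bullet> g = 0 \<and> rnorm u = 1 \<and>
           (rnorm (transpose_mat M *\<^sub>v u))\<^sup>2 = gram_ev j1"
proof (cases "gram_ev j1 < 1")
  case True
  let ?w = "Mc *\<^sub>v col U j1"
  have w: "?w \<in> carrier_vec p" by simp
  have Kw: "K *\<^sub>v ?w = complex_of_real (gram_ev j1) \<cdot>\<^sub>v ?w"
    using K_Mc_col[OF j1(1)] d_eq_gram_ev[OF j1(1)] by simp
  have "?w \<noteq> 0\<^sub>v p"
  proof
    assume "?w = 0\<^sub>v p"
    then have "sqnorm ?w = 0" using sqnorm_eq_0_iff[OF w] by simp
    then show False using d_eq_sqnorm[OF j1(1)] d_eq_gram_ev[OF j1(1)] pos by simp
  qed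
  moreover have "?w \<bullet>c gc = 0"
  proof -
    have "complex_of_real (gram_ev j1) * (?w \<bullet>c gc) = 1 * (?w \<bullet>c gc)"
      using cscalar_prod_K_gc[OF w] Kw cscalar_prod_smult_left[OF w gc_carrier] by simp
    moreover have "complex_of_real (gram_ev j1) \<noteq> 1" using True by simp
    ultimately show ?thesis by (simp only: mult_cancel_right) simp
  qed
  ultimately show ?thesis using complex_eigenvector_attaining[OF w _ Kw] by blast
next
  case False
  then have ev1: "gram_ev j1 = 1" using gram_ev_le_1[OF j1(1)] by simp
  then have "d $ j1 = 1" using d_eq_gram_ev[OF j1(1)] by simp
  then obtain w where "w \<in> carrier_vec p" "w \<noteq> 0\<^sub>v p" "K *\<^sub>v w = complex_of_real 1 \<cdot>\<^sub>v w" "w \<bullet>c gc = 0"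
    using exists_orthogonal_fixed_vector[OF j0 j1(1) _ j1(2)] by blast
  then show ?thesis unfolding ev1 by (rule complex_eigenvector_attaining)
qed

lemma second_singular_value_eq_sqrt_gram_ev:
  assumes "2 \<le> p" "2 \<le> N"
  obtains j0 j1 where "j0 < N" "d $ j0 = 1" "j1 < N" "j1 \<noteq> j0"
    "\<And>j. j < N \<Longrightarrow> j \<noteq> j0 \<Longrightarrow> gram_ev j \<le> gram_ev j1"
    "singular_values M ! 1 = sqrt (gram_ev j1)"
proof -
  obtain j0 where j0: "j0 < N" "d $ j0 = 1" using exists_gram_ev_1 by blast
  define xs where "xs = map (\<lambda>z. sqrt (Re z)) (list_of_vec d)"
  have len: "length xs = N" unfolding xs_def using d_carrier by simp
  have xs_nth: "xs ! j = sqrt (gram_ev j)" if "j < N" for j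
    unfolding xs_def gram_ev_def using that d_carrier by (simp add: list_of_vec_index)
  have "gram_eigenvalues M = mset (list_of_vec d)"
    unfolding gram_eigenvalues_def C_gram[symmetric] by (rule proots_char_poly)
  then have sv: "singular_values M = take (min p N) (rev (sort xs))"
    using M_carrier unfolding singular_values_def xs_def
    by (simp flip: mset_map)
  have "gram_ev j0 = 1" using j0(2) unfolding gram_ev_def by simp
  then have "\<forall>j<length xs. xs ! j \<le> xs ! j0"
    using xs_nth j0(1) gram_ev_le_1 len by simp
  then obtain j1 where j1: "j1 < N" "j1 \<noteq> j0" "rev (sort xs) ! 1 = xs ! j1"
    and j1_max: "\<forall>j<N. j \<noteq> j0 \<longrightarrow> xs ! j \<le> xs ! j1"
    using second_largest_of_sort[of j0 xs] j0 len assms(2) by auto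
  show ?thesis
  proof (rule that[OF j0 j1(1,2)])
    show "gram_ev j \<le> gram_ev j1" if "j < N" "j \<noteq> j0" for j
      using j1_max that xs_nth j1(1) by auto
    have "singular_values M ! 1 = rev (sort xs) ! 1"
      unfolding sv using assms by simp
    then show "singular_values M ! 1 = sqrt (gram_ev j1)"
      using j1(3) xs_nth[OF j1(1)] by simp
  qed
qed

theorem second_singular_value_is_max:
  assumes "2 \<le> p" "2 \<le> N"
  shows "is_max_of {rnorm (transpose_mat M *\<^sub>v u) | u. u \<in> carrier_vec p \<and> u \<bullet> g = 0 \<and> rnorm u = 1}
           (singular_values M ! 1)"
proof -
  obtain j0 j1 where j0: "j0 < N" "d $ j0 = 1" and j1: "j1 < N" "j1 \<noteq> j0"
    and j1_max: "\<And>j. j < N \<Longrightarrow> j \<noteq> j0 \<Longrightarrow> gram_ev j \<le> gram_ev j1"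
    and sv: "singular_values M ! 1 = sqrt (gram_ev j1)"
    using second_singular_value_eq_sqrt_gram_ev[OF assms] by blast
  have upper: "rnorm (transpose_mat M *\<^sub>v u) \<le> sqrt (gram_ev j1)"
    if u: "u \<in> carrier_vec p" "u \<bullet> g = 0" "rnorm u = 1" for u
  proof -
    let ?u = "map_vec complex_of_real u"
    have "sqnorm (Mt *\<^sub>v ?u) \<le> gram_ev j1"
      using u cscalar_prod_of_real_vec[OF u(1) g_carrier] sqnorm_of_real_vec[of u]
      by (intro sqnorm_Mt_orthogonal_le[OF j0 gram_ev_nonneg[OF j1(1)] j1_max]) auto
    then have "(rnorm (transpose_mat M *\<^sub>v u))\<^sup>2 \<le> gram_ev j1"
      using u M_carrier by (simp add: of_real_mat_mult_vec[of _ N p] sqnorm_of_real_vec)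
    then show ?thesis using rnorm_nonneg real_le_rsqrt by blast
  qed
  have "\<exists>u. u \<in> carrier_vec p \<and> u \<bullet> g = 0 \<and> rnorm u = 1 \<and>
          sqrt (gram_ev j1) = rnorm (transpose_mat M *\<^sub>v u)"
  proof (cases "0 < gram_ev j1")
    case True
    then show ?thesis
      using exists_orthogonal_attaining[OF j0 j1 True] rnorm_nonneg by (metis real_sqrt_unique)
  next
    case False
    then have "gram_ev j1 = 0" using gram_ev_nonneg[OF j1(1)] by simp
    moreover obtain u where "u \<in> carrier_vec p" "u \<bullet> g = 0" "rnorm u = 1"
      using exists_unit_orthogonal[OF g_carrier assms(1)] by blast
    ultimately show ?thesis using upper rnorm_nonneg by (metis order_antisym real_sqrt_zero)
  qed
  then show ?thesis unfolding is_max_of_def sv using upper by auto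
qed

end

lemma hermitian_of_real_gram:
  assumes "M \<in> carrier_mat p N"
  shows "mat_adjoint (map_mat complex_of_real (transpose_mat M * M)) = map_mat complex_of_real (transpose_mat M * M)"
proof -
  have "transpose_mat (transpose_mat M * M) = transpose_mat M * M"
    using assms by (simp add: transpose_mult[of _ N p M N])
  then have sym: "(transpose_mat M * M) $$ (j, i) = (transpose_mat M * M) $$ (i, j)" if "i < N" "j < N" for i j
    using assms that by (metis carrier_matD(2) index_mult_mat(2,3) index_transpose_mat(1,2,3))
  show ?thesis
  proof (intro eq_matI)
    fix i j
    assume "i < dim_row (map_mat complex_of_real (transpose_mat M * M))"
      and "j < dim_col (map_mat complex_of_real (transpose_mat M * M))"
    then have "i < N" "j < N" using assms by auto
    then show "mat_adjoint (map_mat complex_of_real (transpose_mat M * M)) $$ (i, j)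
        = map_mat complex_of_real (transpose_mat M * M) $$ (i, j)"
      using assms sym by simp
  qed (use assms in auto)
qed

theorem second_singular_value_of_norming_contraction:
  fixes M :: "real mat" and g :: "real vec"
  assumes M: "M \<in> carrier_mat p N" and dims: "2 \<le> p" "2 \<le> N"
    and contraction: "\<And>u. u \<in> carrier_vec p \<Longrightarrow> rnorm (transpose_mat M *\<^sub>v u) \<le> rnorm u"
    and g: "g \<in> carrier_vec p" "rnorm g = 1" "rnorm (transpose_mat M *\<^sub>v g) = 1"
  shows "is_max_of {rnorm (transpose_mat M *\<^sub>v u) | u. u \<in> carrier_vec p \<and> u \<bullet> g = 0 \<and> rnorm u = 1}
           (singular_values M ! 1)"
proof -
  let ?C = "map_mat complex_of_real (transpose_mat M * M)"
  have "?C \<in> carrier_mat N N" using M by simp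
  then obtain U d where "unitary_mat U N" "d \<in> carrier_vec N" "?C = U * diag_of_vec d * mat_adjoint U"
    using hermitian_unitary_diagonalization hermitian_of_real_gram[OF M] by blast
  then interpret norming_contraction ?C U d N M p g
    using M contraction g by unfold_locales auto
  show ?thesis by (rule second_singular_value_is_max[OF dims])
qed

section \<open>The phase matrix and realification\<close>

lemma dim_phase_vec [simp]: "dim_vec (phase_vec y) = dim_vec y"
  unfolding phase_vec_def by simp

lemma phase_vec_carrier: "phase_vec y \<in> carrier_vec (dim_vec y)"
  by (rule carrier_vecI) (rule dim_phase_vec)

lemma conjugate_phase_vec_carrier: "conjugate (phase_vec y) \<in> carrier_vec (dim_vec y)"
  by (rule carrier_vec_conjugate[OF phase_vec_carrier])

lemma cnj_phase_vec_mult: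
  assumes "j < dim_vec y"
  shows "cnj (phase_vec y $ j) * y $ j = complex_of_real (cmod (y $ j))"
    and "cnj (phase_vec y $ j) * phase_vec y $ j = 1"
proof -
  have "cnj (y $ j) * y $ j = (complex_of_real (cmod (y $ j)))\<^sup>2"
    by (simp add: complex_mult_cnj cmod_power2 mult.commute flip: of_real_power)
  then show "cnj (phase_vec y $ j) * y $ j = complex_of_real (cmod (y $ j))"
    "cnj (phase_vec y $ j) * phase_vec y $ j = 1"
    using assms unfolding phase_vec_def by (auto simp: power2_eq_square field_simps)
qed

lemma mat_adjoint_diag_of_vec: "mat_adjoint (diag_of_vec d) = diag_of_vec (conjugate d)"
  unfolding diag_of_vec_def by (rule eq_matI) auto

lemma diag_of_vec_mult:
  assumes "d \<in> carrier_vec n" "e \<in> carrier_vec n"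
  shows "diag_of_vec d * diag_of_vec e = diag_of_vec (vec n (\<lambda>j. d $ j * e $ j))"
proof (rule eq_matI)
  fix i j assume "i < dim_row (diag_of_vec (vec n (\<lambda>j. d $ j * e $ j)))"
    "j < dim_col (diag_of_vec (vec n (\<lambda>j. d $ j * e $ j)))"
  then have i: "i < n" and j: "j < n" by (simp_all add: diag_of_vec_def)
  have "(diag_of_vec d * diag_of_vec e) $$ (i,j)
      = (\<Sum>k\<in>{0..<n}. (if i = k then d $ i else 0) * (if k = j then e $ k else 0))"
    using assms i j by (simp add: diag_of_vec_def) (simp add: scalar_prod_def)
  also have "\<dots> = (\<Sum>k\<in>{0..<n}. if k = i then (if i = j then d $ i * e $ i else 0) else 0)"
    by (rule sum.cong) auto
  finally show "(diag_of_vec d * diag_of_vec e) $$ (i,j) = diag_of_vec (vec n (\<lambda>j. d $ j * e $ j)) $$ (i,j)"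
    using i j by (simp add: diag_of_vec_def)
next
  show "dim_row (diag_of_vec d * diag_of_vec e) = dim_row (diag_of_vec (vec n (\<lambda>j. d $ j * e $ j)))"
    using assms by (simp add: diag_of_vec_def)
next
  show "dim_col (diag_of_vec d * diag_of_vec e) = dim_col (diag_of_vec (vec n (\<lambda>j. d $ j * e $ j)))"
    using assms by (simp add: diag_of_vec_def)
qed

lemma unitary_diag_of_phase_vec: "unitary_mat (diag_of_vec (phase_vec y)) (dim_vec y)"
proof -
  let ?d = "phase_vec y" and ?n = "dim_vec y"
  have "diag_of_vec (conjugate ?d) * diag_of_vec ?d
      = diag_of_vec (vec ?n (\<lambda>j. conjugate ?d $ j * ?d $ j))"
    by (rule diag_of_vec_mult[OF conjugate_phase_vec_carrier phase_vec_carrier])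
  also have "vec ?n (\<lambda>j. conjugate ?d $ j * ?d $ j) = vec ?n (\<lambda>_. 1)"
    by (intro eq_vecI) (simp_all add: cnj_phase_vec_mult(2))
  also have "diag_of_vec (vec ?n (\<lambda>_. 1)) = 1\<^sub>m ?n"
    by (rule eq_matI) (auto simp: diag_of_vec_def)
  finally have "mat_adjoint (diag_of_vec ?d) * diag_of_vec ?d = 1\<^sub>m ?n"
    unfolding mat_adjoint_diag_of_vec .
  moreover have "diag_of_vec ?d \<in> carrier_mat ?n ?n"
    by (rule diag_of_vec_carrier[OF phase_vec_carrier])
  ultimately show ?thesis unfolding unitary_mat_def by blast
qed

context
  fixes n N :: nat and A :: "complex mat" and x0 :: "complex vec"
  assumes A: "A \<in> carrier_mat n N" and x0: "x0 \<in> carrier_vec n"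
begin

lemma phaseB_eq: "phaseB A x0 = A * diag_of_vec (phase_vec (mat_adjoint A *\<^sub>v x0))"
  unfolding phaseB_def ..

lemma phase_carrier: "diag_of_vec (phase_vec (mat_adjoint A *\<^sub>v x0)) \<in> carrier_mat N N"
  using carrier_matD[OF A] by (simp add: diag_of_vec_def)

lemma phaseB_carrier: "phaseB A x0 \<in> carrier_mat n N"
  unfolding phaseB_eq using A phase_carrier by simp

lemma phaseB_coisometry:
  assumes AA: "A * mat_adjoint A = 1\<^sub>m n"
  shows "phaseB A x0 * mat_adjoint (phaseB A x0) = 1\<^sub>m n"
proof -
  let ?D = "diag_of_vec (phase_vec (mat_adjoint A *\<^sub>v x0))"
  have DD: "?D * mat_adjoint ?D = 1\<^sub>m N"
    using unitary_mat_right_inverse[OF unitary_diag_of_phase_vec] A by simp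
  have D: "?D \<in> carrier_mat N N" and Da: "mat_adjoint ?D \<in> carrier_mat N N"
    and Aa: "mat_adjoint A \<in> carrier_mat N n"
    using phase_carrier A by auto
  have "phaseB A x0 * mat_adjoint (phaseB A x0) = A * (?D * (mat_adjoint ?D * mat_adjoint A))"
    unfolding phaseB_eq mat_adjoint_mult[OF A D]
    by (rule assoc_mult_mat[OF A D mult_carrier_mat[OF Da Aa]])
  also have "?D * (mat_adjoint ?D * mat_adjoint A) = (?D * mat_adjoint ?D) * mat_adjoint A"
    by (rule assoc_mult_mat[OF D Da Aa, symmetric])
  also have "\<dots> = mat_adjoint A"
    unfolding DD by (rule left_mult_one_mat[OF Aa])
  finally show ?thesis using AA by simp
qed

lemma mat_adjoint_phaseB_mult_x0:
  "mat_adjoint (phaseB A x0) *\<^sub>v x0 = vec N (\<lambda>k. complex_of_real (cmod ((mat_adjoint A *\<^sub>v x0) $ k)))"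
proof -
  define y where "y = mat_adjoint A *\<^sub>v x0"
  have y: "y \<in> carrier_vec N" unfolding y_def by (rule mult_mat_vec_carrier[OF mat_adjoint_carrier[OF A] x0])
  have "mat_adjoint (phaseB A x0) *\<^sub>v x0 = diag_of_vec (conjugate (phase_vec y)) *\<^sub>v y"
    unfolding phaseB_eq mat_adjoint_mult[OF A phase_carrier] mat_adjoint_diag_of_vec[symmetric] y_def
    using A x0 phase_carrier by (simp add: assoc_mult_mat_vec[of _ N N _ n])
  also have "\<dots> = vec N (\<lambda>k. conjugate (phase_vec y) $ k * y $ k)"
  proof -
    have "conjugate (phase_vec y) \<in> carrier_vec N"
      using conjugate_phase_vec_carrier[of y] carrier_vecD[OF y] by simp
    then show ?thesis by (rule diag_of_vec_mult_vec[OF _ y])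
  qed
  also have "\<dots> = vec N (\<lambda>k. complex_of_real (cmod (y $ k)))"
    using carrier_vecD[OF y] by (intro eq_vecI) (simp_all add: cnj_phase_vec_mult(1))
  finally show ?thesis unfolding y_def .
qed

end

lemma sum_lessThan_double:
  fixes f :: "nat \<Rightarrow> 'a :: comm_monoid_add"
  shows "(\<Sum>i<2 * n. f i) = (\<Sum>i<n. f i) + (\<Sum>i<n. f (i + n))"
proof -
  have "(\<Sum>i<2 * n. f i) = (\<Sum>i\<in>{0..<n}. f i) + (\<Sum>i\<in>{n..<n + n}. f i)"
    using sum.atLeastLessThan_concat[of 0 n "n + n" f] by (simp add: atLeast0LessThan mult_2)
  also have "(\<Sum>i\<in>{n..<n + n}. f i) = (\<Sum>i\<in>{0..<n}. f (i + n))"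
    using sum.shift_bounds_nat_ivl[of f 0 n n] by simp
  finally show ?thesis by (simp add: atLeast0LessThan)
qed

lemma realify_carrier: "B \<in> carrier_mat n N \<Longrightarrow> realify B \<in> carrier_mat (2 * n) N"
  unfolding realify_def carrier_mat_def by auto

lemma Gvec_carrier: "v \<in> carrier_vec n \<Longrightarrow> Gvec v \<in> carrier_vec (2 * n)"
  unfolding Gvec_def by (intro carrier_vecI) (simp add: carrier_vecD)

lemma Gvec_surj:
  assumes "w \<in> carrier_vec (2 * n)"
  shows "\<exists>v. v \<in> carrier_vec n \<and> w = Gvec v"
  using assms
  by (intro exI[of _ "vec n (\<lambda>k. Complex (w $ k) (w $ (k + n)))"]) (auto simp: Gvec_def intro!: eq_vecI)

lemma transpose_realify_mult_Gvec:
  assumes B: "B \<in> carrier_mat n N" and v: "v \<in> carrier_vec n"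
  shows "transpose_mat (realify B) *\<^sub>v Gvec v = map_vec Re (mat_adjoint B *\<^sub>v v)"
proof (rule eq_vecI)
  fix k assume "k < dim_vec (map_vec Re (mat_adjoint B *\<^sub>v v))"
  then have k: "k < N" using B by simp
  have "(transpose_mat (realify B) *\<^sub>v Gvec v) $ k = (\<Sum>i<2 * n. realify B $$ (i,k) * Gvec v $ i)"
    using k B v realify_carrier[OF B] Gvec_carrier[OF v] by (simp add: scalar_prod_def atLeast0LessThan)
  also have "\<dots> = (\<Sum>i<n. Re (B $$ (i,k)) * Re (v $ i) + Im (B $$ (i,k)) * Im (v $ i))"
    unfolding sum_lessThan_double using k B v by (simp add: realify_def Gvec_def sum.distrib)
  also have "\<dots> = map_vec Re (mat_adjoint B *\<^sub>v v) $ k"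
    using k B v by (simp add: scalar_prod_def atLeast0LessThan Re_sum)
  finally show "(transpose_mat (realify B) *\<^sub>v Gvec v) $ k = map_vec Re (mat_adjoint B *\<^sub>v v) $ k" .
qed (use B in \<open>simp add: realify_def\<close>)

lemma rnorm_Gvec_square: "(rnorm (Gvec v))\<^sup>2 = sqnorm v"
proof -
  have "(rnorm (Gvec v))\<^sup>2 = (\<Sum>i<2 * dim_vec v. (Gvec v $ i)\<^sup>2)"
    unfolding rnorm_def by (simp add: Gvec_def sum_nonneg)
  also have "\<dots> = (\<Sum>i<dim_vec v. (Re (v $ i))\<^sup>2 + (Im (v $ i))\<^sup>2)"
    unfolding sum_lessThan_double by (simp add: Gvec_def sum.distrib)
  finally show ?thesis unfolding sqnorm_eq_sum by (simp add: cmod_power2)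
qed

lemma rnorm_Gvec: "rnorm (Gvec v) = cnorm v"
proof (rule power2_eq_imp_eq)
  show "(rnorm (Gvec v))\<^sup>2 = (cnorm v)\<^sup>2" unfolding rnorm_Gvec_square cnorm_square ..
qed (simp_all add: rnorm_nonneg cnorm_def sum_nonneg)

lemma Gvec_scalar_prod:
  assumes "a \<in> carrier_vec n" "b \<in> carrier_vec n"
  shows "Gvec a \<bullet> Gvec b = cinner_re a b"
proof -
  have "Gvec a \<bullet> Gvec b = (\<Sum>i<2 * n. Gvec a $ i * Gvec b $ i)"
    using assms Gvec_carrier[OF assms(2)] by (simp add: scalar_prod_def atLeast0LessThan)
  also have "\<dots> = (\<Sum>i<n. Re (a $ i) * Re (b $ i) + Im (a $ i) * Im (b $ i))"
    unfolding sum_lessThan_double using assms by (simp add: Gvec_def sum.distrib)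
  finally show ?thesis unfolding cinner_re_def using assms by (simp add: Re_sum)
qed

lemma Im_vec_eq_transpose_realify_mult:
  assumes B: "B \<in> carrier_mat n N" and u: "u \<in> carrier_vec n"
  shows "Im_vec (mat_adjoint B *\<^sub>v u) = transpose_mat (realify B) *\<^sub>v Gvec ((- \<i>) \<cdot>\<^sub>v u)"
  unfolding transpose_realify_mult_Gvec[OF B smult_carrier_vec[THEN iffD2, OF u]]
    mult_mat_vec[OF mat_adjoint_carrier[OF B] u] Im_vec_def
  using B by (intro eq_vecI) auto

lemma transpose_realify_contraction:
  assumes B: "B \<in> carrier_mat n N" "B * mat_adjoint B = 1\<^sub>m n" and w: "w \<in> carrier_vec (2 * n)"
  shows "rnorm (transpose_mat (realify B) *\<^sub>v w) \<le> rnorm w"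
proof -
  obtain v where v: "v \<in> carrier_vec n" and wv: "w = Gvec v" using Gvec_surj[OF w] by blast
  have "(rnorm (transpose_mat (realify B) *\<^sub>v w))\<^sup>2 \<le> sqnorm (mat_adjoint B *\<^sub>v v)"
    unfolding wv transpose_realify_mult_Gvec[OF B(1) v] sqnorm_Re_Im[of "mat_adjoint B *\<^sub>v v"] by simp
  also have "\<dots> = (rnorm w)\<^sup>2"
    unfolding wv rnorm_Gvec_square by (rule sqnorm_mat_adjoint_mult[OF B v])
  finally show ?thesis using rnorm_nonneg power2_le_imp_le by blast
qed

lemma cnorm_smult_unit: "cmod c = 1 \<Longrightarrow> cnorm (c \<cdot>\<^sub>v u) = cnorm u"
  unfolding cnorm_def by (simp add: norm_mult)

lemma cinner_re_smult_uminus: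
  assumes "u \<in> carrier_vec n" "x \<in> carrier_vec n"
  shows "cinner_re ((- c) \<cdot>\<^sub>v u) x = - cinner_re (c \<cdot>\<^sub>v u) x"
  using assms unfolding cinner_re_def by (simp add: sum_negf)

lemma Im_vec_constraint_set_eq:
  assumes B: "B \<in> carrier_mat n N" and x0: "x0 \<in> carrier_vec n"
  shows "{rnorm (Im_vec (mat_adjoint B *\<^sub>v u)) | u.
            u \<in> carrier_vec n \<and> cinner_re (\<i> \<cdot>\<^sub>v u) x0 = 0 \<and> cnorm u = 1}
       = {rnorm (transpose_mat (realify B) *\<^sub>v w) | w.
            w \<in> carrier_vec (2 * n) \<and> w \<bullet> Gvec x0 = 0 \<and> rnorm w = 1}"
    (is "?S1 = ?S2")
proof
  show "?S1 \<subseteq> ?S2"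
  proof
    fix r assume "r \<in> ?S1"
    then obtain u where u: "u \<in> carrier_vec n" "cinner_re (\<i> \<cdot>\<^sub>v u) x0 = 0" "cnorm u = 1"
      and r: "r = rnorm (Im_vec (mat_adjoint B *\<^sub>v u))" by blast
    let ?w = "Gvec ((- \<i>) \<cdot>\<^sub>v u)"
    have "?w \<bullet> Gvec x0 = 0"
      using u x0 by (simp add: Gvec_scalar_prod[of _ n] cinner_re_smult_uminus[OF u(1) x0])
    moreover have "rnorm ?w = 1" using u(3) by (simp add: rnorm_Gvec cnorm_smult_unit)
    moreover have "r = rnorm (transpose_mat (realify B) *\<^sub>v ?w)"
      unfolding r Im_vec_eq_transpose_realify_mult[OF B u(1)] ..
    ultimately show "r \<in> ?S2" using Gvec_carrier[of _ n] u(1) by auto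
  qed
  show "?S2 \<subseteq> ?S1"
  proof
    fix r assume "r \<in> ?S2"
    then obtain w where w: "w \<in> carrier_vec (2 * n)" "w \<bullet> Gvec x0 = 0" "rnorm w = 1"
      and r: "r = rnorm (transpose_mat (realify B) *\<^sub>v w)" by blast
    obtain v where v: "v \<in> carrier_vec n" and wv: "w = Gvec v" using Gvec_surj[OF w(1)] by blast
    let ?u = "\<i> \<cdot>\<^sub>v v"
    have vu: "(- \<i>) \<cdot>\<^sub>v ?u = v" using v by (intro eq_vecI) auto
    have u: "?u \<in> carrier_vec n" using v by simp
    have "cinner_re v x0 = 0" using w(2) unfolding wv Gvec_scalar_prod[OF v x0] .
    then have "cinner_re (\<i> \<cdot>\<^sub>v ?u) x0 = 0"
      using cinner_re_smult_uminus[OF u x0, of \<i>] vu by simp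
    moreover have "cnorm ?u = 1" using w(3) unfolding wv by (simp add: rnorm_Gvec cnorm_smult_unit)
    moreover have "r = rnorm (Im_vec (mat_adjoint B *\<^sub>v ?u))"
      unfolding r Im_vec_eq_transpose_realify_mult[OF B u] vu wv ..
    ultimately show "r \<in> ?S1" using v by auto
  qed
qed

lemma rnorm_transpose_realify_phaseB_Gvec:
  assumes A: "A \<in> carrier_mat n N" "A * mat_adjoint A = 1\<^sub>m n" and x0: "x0 \<in> carrier_vec n"
  shows "rnorm (transpose_mat (realify (phaseB A x0)) *\<^sub>v Gvec x0) = cnorm x0"
proof -
  let ?z = "mat_adjoint (phaseB A x0) *\<^sub>v x0"
  have B: "phaseB A x0 \<in> carrier_mat n N" by (rule phaseB_carrier[OF A(1) x0])
  have "rnorm (map_vec Im ?z) = 0"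
    unfolding mat_adjoint_phaseB_mult_x0[OF A(1) x0] rnorm_def by simp
  then have "(rnorm (map_vec Re ?z))\<^sup>2 = (cnorm x0)\<^sup>2"
    using sqnorm_Re_Im[of ?z] sqnorm_mat_adjoint_mult[OF B phaseB_coisometry[OF A(1) x0 A(2)] x0]
    by (simp add: cnorm_square)
  then show ?thesis
    unfolding transpose_realify_mult_Gvec[OF B x0]
    by (rule power2_eq_imp_eq) (simp_all add: rnorm_nonneg cnorm_def sum_nonneg)
qed

theorem mainTheorem7:
  fixes n N :: nat and A :: "complex mat" and x0 :: "complex vec"
  assumes "A \<in> carrier_mat n N"
    and "A * mat_adjoint A = 1\<^sub>m n"
    and "N \<ge> 2 * n"
    and "x0 \<in> carrier_vec n"
    and "cnorm x0 = 1"
  shows "is_max_of {rnorm (Im_vec (mat_adjoint (phaseB A x0) *\<^sub>v u)) | u.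
            u \<in> carrier_vec n \<and> cinner_re (smult_vec \<i> u) x0 = 0 \<and> cnorm u = 1}
           (singular_values (realify (phaseB A x0)) ! 1)
       \<and> is_max_of {rnorm (transpose_mat (realify (phaseB A x0)) *\<^sub>v u) | u.
            u \<in> carrier_vec (2 * n) \<and> u \<bullet> Gvec x0 = 0 \<and> rnorm u = 1}
           (singular_values (realify (phaseB A x0)) ! 1)"
proof -
  note A = assms(1,2) and x0 = assms(4,5)
  have B: "phaseB A x0 \<in> carrier_mat n N" by (rule phaseB_carrier[OF A(1) x0(1)])
  have BB: "phaseB A x0 * mat_adjoint (phaseB A x0) = 1\<^sub>m n"
    by (rule phaseB_coisometry[OF A(1) x0(1) A(2)])
  have "n \<noteq> 0"
  proof
    assume "n = 0"
    then have "cnorm x0 = 0" using x0(1) by (simp add: cnorm_def)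
    then show False using x0(2) by simp
  qed
  then have dims: "2 \<le> 2 * n" "2 \<le> N" using assms(3) by linarith+
  have "is_max_of {rnorm (transpose_mat (realify (phaseB A x0)) *\<^sub>v u) | u.
            u \<in> carrier_vec (2 * n) \<and> u \<bullet> Gvec x0 = 0 \<and> rnorm u = 1}
           (singular_values (realify (phaseB A x0)) ! 1)"
    using second_singular_value_of_norming_contraction[OF realify_carrier[OF B] dims
        transpose_realify_contraction[OF B BB] Gvec_carrier[OF x0(1)]]
      rnorm_Gvec rnorm_transpose_realify_phaseB_Gvec[OF A x0(1)] x0(2) by simp
  then show ?thesis using Im_vec_constraint_set_eq[OF B x0(1)] by simp
qed

end
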